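(* Let $\mathbb{K}\in\{\mathbb{R},\mathbb{C}\}$, $d,m,n\ge1$ with $(m,n)\ne(1,1)$, and let $(\mathcal{X}^d,\pi^\Delta)$ be a non-degenerate simplicial resolution of the projection $\pi^{d,m}_{n,\mathbb{K}}:Z^{d,m}_{n,\mathbb{K}}\to\Sigma^{d,m}_{n,\mathbb{K}}$, with filtration $\mathcal{X}^d_0\subset\mathcal{X}^d_1\subset\cdots$. Then for each $1\le k\le\lfloor d/n\rfloor$, the space $\mathcal{X}^d_k\setminus\mathcal{X}^d_{k-1}$ is homeomorphic to the total space of a real affine bundle over the unordered configuration space $C_k(\mathbb{R})$ of rank $l_{d,k}=d(\mathbb{K})m(d-nk)+k-1$.
   Context: $\mathrm{P}^d(\mathbb{K})$ is the space of monic degree-$d$ polynomials over $\mathbb{K}$, $d(\mathbb{K})=\dim_\mathbb{R}\mathbb{K}$. For $f_k$, $\mathbf{f}_k(z)=(f_k(z),f_k(z)+f_k'(z),\dots,f_k(z)+f_k^{(n-1)}(z))$. The discriminant is $\Sigma^{d,m}_{n,\mathbb{K}}=\{(f_1,\dots,f_m)\in\mathrm{P}^d(\mathbb{K})^m:\ \mathbf{f}_1(x)=\cdots=\mathbf{f}_m(x)=0\text{ for some }x\in\mathbb{R}\}$ (tuples with a common real root of multiplicity $\ge n$). Its tautological normalization is $Z^{d,m}_{n,\mathbb{K}}=\{((f_1,\dots,f_m),x)\in\Sigma^{d,m}_{n,\mathbb{K}}\times\mathbb{R}:\mathbf{f}_1(x)=\cdots=\mathbf{f}_m(x)=0\}$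 with $\pi^{d,m}_{n,\mathbb{K}}$ the first projection. Simplicial resolution: given a surjection $h:X\to Y$ with finite fibres and an embedding $i:X\to\mathbb{R}^N$, set $\mathcal{X}^\Delta=\{(y,u)\in Y\times\mathbb{R}^N: u\in\sigma(i(h^{-1}(y)))\}$ where $\sigma(\cdot)$ is the convex hull, and $h^\Delta(y,u)=y$; it is non-degenerate if for each $y$ any $k$ points of $i(h^{-1}(y))$ span a $(k-1)$-simplex. $\mathcal{X}^\Delta_k$ is the subspace of $(y,u)$ with $u$ in the convex hull of at most $k$ points of $i(h^{-1}(y))$. $C_k(\mathbb{R})$ is the space of unordered $k$-element subsets of $\mathbb{R}$. *)

theory Defs
  imports "HOL-Analysis.Analysis" "HOL-Computational_Algebra.Polynomial"
begin

text \<open>K is either the reals (embedded in C) or the whole of C.\<close>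

definition dimK :: "complex set \<Rightarrow> nat" where
  "dimK K = (if K = \<real> then 1 else 2)"

text \<open>A tuple (f_1,...,f_m) of monic degree-d polynomials is encoded by
  c :: nat => nat => complex, where c j i (j < m, i < d) is the coefficient of
  z^i in f_(j+1); all other entries are 0.  The leading coefficient 1 is implicit.
  The topology is the (product = Euclidean) topology on the coefficients.\<close>

definition PolyTuples :: "complex set \<Rightarrow> nat \<Rightarrow> nat \<Rightarrow> (nat \<Rightarrow> nat \<Rightarrow> complex) set" where
  "PolyTuples K d m =
     {c. \<forall>j i. (j < m \<and> i < d \<longrightarrow> c j i \<in> K) \<and> (\<not> (j < m \<and> i < d) \<longrightarrow> c j i = 0)}"

definition poly_of :: "nat \<Rightarrow> (nat \<Rightarrow> complex) \<Rightarrow> complex poly" where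
  "poly_of d a = monom 1 d + (\<Sum>i<d. monom (a i) i)"

definition boldf :: "nat \<Rightarrow> complex poly \<Rightarrow> complex \<Rightarrow> complex list" where
  "boldf n f z = map (\<lambda>i. if i = 0 then poly f z else poly f z + poly ((pderiv ^^ i) f) z) [0..<n]"

definition boldf_zero :: "nat \<Rightarrow> complex poly \<Rightarrow> real \<Rightarrow> bool" where
  "boldf_zero n f x \<longleftrightarrow> (\<forall>v \<in> set (boldf n f (complex_of_real x)). v = 0)"

definition Sigma_disc :: "complex set \<Rightarrow> nat \<Rightarrow> nat \<Rightarrow> nat \<Rightarrow> (nat \<Rightarrow> nat \<Rightarrow> complex) set" where
  "Sigma_disc K d m n =
     {c \<in> PolyTuples K d m. \<exists>x::real. \<forall>j<m. boldf_zero n (poly_of d (c j)) x}"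

definition Z_taut :: "complex set \<Rightarrow> nat \<Rightarrow> nat \<Rightarrow> nat \<Rightarrow> ((nat \<Rightarrow> nat \<Rightarrow> complex) \<times> real) set" where
  "Z_taut K d m n =
     {(c, x). c \<in> Sigma_disc K d m n \<and> (\<forall>j<m. boldf_zero n (poly_of d (c j)) x)}"

text \<open>The projection pi : Z -> Sigma is fst.\<close>

definition nondegenerate_resolution ::
  "'x topology \<Rightarrow> 'y set \<Rightarrow> ('x \<Rightarrow> 'y) \<Rightarrow> ('x \<Rightarrow> 'e::euclidean_space) \<Rightarrow> bool" where
  "nondegenerate_resolution X Y h i \<longleftrightarrow>
     h ` topspace X = Y \<and>
     (\<forall>y\<in>Y. finite {x \<in> topspace X. h x = y}) \<and>
     embedding_map X euclidean i \<and>
     (\<forall>y\<in>Y. \<not> affine_dependent (i ` {x \<in> topspace X. h x = y}))"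

definition resolution_filt ::
  "'x topology \<Rightarrow> 'y set \<Rightarrow> ('x \<Rightarrow> 'y) \<Rightarrow> ('x \<Rightarrow> 'e::euclidean_space) \<Rightarrow> nat \<Rightarrow> ('y \<times> 'e) set" where
  "resolution_filt X Y h i k =
     {(y, u). y \<in> Y \<and> (\<exists>S. S \<subseteq> i ` {x \<in> topspace X. h x = y} \<and> finite S \<and> card S \<le> k
                              \<and> u \<in> convex hull S)}"

definition Conf :: "nat \<Rightarrow> real set set" where
  "Conf k = {S. finite S \<and> card S = k}"

text \<open>Topology: pulled back from R^k via the ordered coordinates x_1 < ... < x_k
  (i.e. C_k(R) is identified with the open chamber {x_1 < ... < x_k} of R^k).\<close>

definition Conf_top :: "nat \<Rightarrow> real set topology" where
  "Conf_top k = pullback_topology (Conf k)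
     (\<lambda>S i. if i < k then sorted_list_of_set S ! i else 0) (euclidean :: (nat \<Rightarrow> real) topology)"

text \<open>R^l, realised as sequences vanishing from index l on (product topology = Euclidean).\<close>

definition Rl :: "nat \<Rightarrow> (nat \<Rightarrow> real) set" where
  "Rl l = {v. \<forall>i\<ge>l. v i = 0}"

definition affine_bij_Rl :: "nat \<Rightarrow> ((nat \<Rightarrow> real) \<Rightarrow> (nat \<Rightarrow> real)) \<Rightarrow> bool" where
  "affine_bij_Rl l g \<longleftrightarrow> bij_betw g (Rl l) (Rl l) \<and>
     (\<forall>v\<in>Rl l. \<forall>w\<in>Rl l. \<forall>t::real. g (\<lambda>j. t * v j + (1 - t) * w j) = (\<lambda>j. t * g v j + (1 - t) * g w j))"

definition local_triv ::
  "'e topology \<Rightarrow> 'b topology \<Rightarrow> ('e \<Rightarrow> 'b) \<Rightarrow> nat \<Rightarrow> 'b set \<Rightarrow> ('e \<Rightarrow> 'b \<times> (nat \<Rightarrow> real)) \<Rightarrow> bool" where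
  "local_triv E B p l U \<phi> \<longleftrightarrow>
     openin B U \<and>
     homeomorphic_map (subtopology E {e \<in> topspace E. p e \<in> U})
       (prod_topology (subtopology B U) (subtopology euclidean (Rl l))) \<phi> \<and>
     (\<forall>e\<in>topspace E. p e \<in> U \<longrightarrow> fst (\<phi> e) = p e)"

definition real_affine_bundle :: "'e topology \<Rightarrow> 'b topology \<Rightarrow> ('e \<Rightarrow> 'b) \<Rightarrow> nat \<Rightarrow> bool" where
  "real_affine_bundle E B p l \<longleftrightarrow>
     continuous_map E B p \<and> p ` topspace E = topspace B \<and>
     (\<exists>\<A>. (\<forall>(U, \<phi>) \<in> \<A>. local_triv E B p l U \<phi>) \<and>
          (\<forall>b\<in>topspace B. \<exists>(U, \<phi>) \<in> \<A>. b \<in> U) \<and>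
          (\<forall>(U, \<phi>) \<in> \<A>. \<forall>(V, \<psi>) \<in> \<A>. \<forall>b \<in> U \<inter> V.
              \<exists>g. affine_bij_Rl l g \<and>
                  (\<forall>e\<in>topspace E. p e = b \<longrightarrow> snd (\<psi> e) = g (snd (\<phi> e)))))"

end

theory Submission
  imports Defs
begin

text \<open>A point of \<open>X\<^sub>k - X\<^sub>k\<^sub>-\<^sub>1\<close> over \<open>y\<close> is an interior point of a simplex spanned by exactly \<open>k\<close>
  points \<open>(y, x\<^sub>1), ..., (y, x\<^sub>k)\<close> of the fibre, so \<open>x\<^sub>1 < ... < x\<^sub>k\<close> are common real roots of
  multiplicity \<open>\<ge> n\<close> and every \<open>f\<^sub>j\<close> factors as \<open>g\<^sub>x h\<^sub>j\<close>, where \<open>g\<^sub>x = \<Prod>\<^sub>r (z - x\<^sub>r)\<^sup>n\<close> and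
  \<open>h\<^sub>j\<close> is monic of degree \<open>d - nk\<close> over \<open>K\<close>. Conversely roots, cofactors and positive barycentric
  weights determine such a point, and non-degeneracy of the resolution makes this parametrisation
  injective. Encoding the cofactors by their real coefficients and the weights by \<open>k - 1\<close>
  logarithmic ratios identifies the stratum with \<open>C\<^sub>k(\<real>) \<times> \<real>\<^sup>l\<close>, a trivial affine bundle.
  The inverse is continuous because the roots stay bounded (Cauchy's bound) and a limit of
  barycentres with a repeated vertex or a vanishing weight would lie in \<open>X\<^sub>k\<^sub>-\<^sub>1\<close>.\<close>

section \<open>Polynomials\<close>

lemma strong_downward_induct:
  fixes P :: "nat \<Rightarrow> bool"
  assumes "\<And>i. e \<le> i \<Longrightarrow> P i" "\<And>i. i < e \<Longrightarrow> (\<And>j. i < j \<Longrightarrow> P j) \<Longrightarrow> P i"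
  shows "P i"
proof (induction "e - i" arbitrary: i rule: less_induct)
  case less
  then show ?case using assms by (metis diff_less_mono2 not_le)
qed

lemma linear_power_dvd_pderiv_funpow:
  fixes f :: "'a::{idom,semiring_char_0} poly"
  assumes "[:-a,1:]^n dvd f" "i \<le> n"
  shows "[:-a,1:]^(n-i) dvd (pderiv^^i) f"
  using assms
proof (induction i arbitrary: f n)
  case 0 then show ?case by simp
next
  case (Suc i)
  then obtain n' where n': "n = Suc n'" by (cases n) auto
  from Suc.prems(1) obtain q where q: "f = [:-a,1:]^(Suc n') * q" using n' by (auto elim: dvdE)
  have "pderiv f = [:- a, 1:] ^ Suc n' * pderiv q + smult (of_nat (Suc n')) (q * [:- a, 1:] ^ n')"
    unfolding q by (rule lemma_order_pderiv1)
  then have "[:-a,1:]^n' dvd pderiv f"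
    by (metis dvd_add dvd_mult2 dvd_smult dvd_triv_right power_Suc)
  then have "[:-a,1:]^(n'-i) dvd (pderiv^^i) (pderiv f)"
    using Suc.IH[of n' "pderiv f"] Suc.prems n' by simp
  then show ?case using n' by (simp add: funpow_Suc_right del: funpow.simps)
qed

lemma pderiv_funpow_vanish_iff_dvd:
  fixes f :: "'a::{idom,semiring_char_0} poly"
  shows "(\<forall>i<n. poly ((pderiv^^i) f) a = 0) \<longleftrightarrow> [:-a,1:]^n dvd f"
proof (induction n arbitrary: f)
  case 0 then show ?case by simp
next
  case (Suc n)
  have split: "(\<forall>i<Suc n. poly ((pderiv^^i) f) a = 0) \<longleftrightarrow>
        poly f a = 0 \<and> (\<forall>i<n. poly ((pderiv^^i) (pderiv f)) a = 0)"
    by (auto simp: less_Suc_eq_0_disj funpow_Suc_right simp del: funpow.simps)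
  show ?case
  proof
    assume "\<forall>i<Suc n. poly ((pderiv^^i) f) a = 0"
    then have root: "poly f a = 0" and dvd: "[:-a,1:]^n dvd pderiv f" using split Suc.IH by auto
    show "[:-a,1:]^Suc n dvd f"
    proof (cases "f = 0 \<or> pderiv f = 0")
      case True
      then show ?thesis using root by (auto dest!: pderiv_iszero)
    next
      case False
      then have "order a f = Suc (order a (pderiv f))" "n \<le> order a (pderiv f)"
        using order_pderiv root dvd order_divides by blast+
      then show ?thesis using False order_divides by (metis Suc_le_mono)
    qed
  next
    assume dvd: "[:-a,1:]^Suc n dvd f"
    then have "poly f a = 0" by (metis dvd_power dvd_trans poly_eq_0_iff_dvd zero_less_Suc)
    moreover have "[:-a,1:]^n dvd pderiv f" using linear_power_dvd_pderiv_funpow[OF dvd, of 1] by simp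
    ultimately show "\<forall>i<Suc n. poly ((pderiv^^i) f) a = 0" using split Suc.IH by auto
  qed
qed

lemma boldf_zero_iff_dvd:
  "boldf_zero n f x \<longleftrightarrow> [:-complex_of_real x,1:]^n dvd f"
proof -
  define z where "z = complex_of_real x"
  define entry where "entry i = (if i = 0 then poly f z else poly f z + poly ((pderiv^^i) f) z)" for i
  have "set (boldf n f z) = entry ` {0..<n}"
    unfolding boldf_def entry_def by (simp only: set_map set_upt)
  then have "boldf_zero n f x \<longleftrightarrow> (\<forall>i<n. entry i = 0)"
    unfolding boldf_zero_def z_def by auto
  also have "\<dots> \<longleftrightarrow> (\<forall>i<n. poly ((pderiv^^i) f) z = 0)"
    unfolding entry_def
    by (cases n) (auto simp del: funpow.simps, metis add_0 funpow_0 not_gr0, metis funpow_0 zero_less_Suc)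
  finally show ?thesis by (simp add: z_def pderiv_funpow_vanish_iff_dvd)
qed

lemma prod_linear_powers_dvd:
  fixes f :: "'a::idom poly"
  assumes "finite A" "inj_on c A" "\<forall>r\<in>A. [:-c r,1:]^n dvd f"
  shows "(\<Prod>r\<in>A. [:-c r,1:]^n) dvd f"
  using assms
proof (induction A rule: finite_induct)
  case empty then show ?case by simp
next
  case (insert b A)
  then obtain s where s: "f = (\<Prod>r\<in>A. [:-c r,1:]^n) * s" by (auto elim: dvdE)
  have "[:-c b,1:]^n dvd s"
  proof (cases "f = 0")
    case True then show ?thesis using s by (simp add: insert.hyps(1))
  next
    case False
    have nz: "(\<Prod>r\<in>A. [:-c r,1:]^n) * s \<noteq> 0" using False s by simp
    have "poly (\<Prod>r\<in>A. [:-c r,1:]^n) (c b) \<noteq> 0"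
      using insert.prems(1) insert.hyps by (auto simp: poly_prod)
    then have "order (c b) f = order (c b) s"
      using order_mult[OF nz] s order_0I by simp
    moreover have "n \<le> order (c b) f" using insert.prems False order_divides by blast
    ultimately show ?thesis using nz order_divides by auto
  qed
  then show ?case using s insert.hyps by (simp add: mult_dvd_mono mult.commute)
qed

lemma coeff_monic_mult_shift:
  fixes g h :: "'a::comm_ring_1 poly"
  assumes "degree g = N" "coeff g N = 1"
  shows "coeff (g*h) (N+i) = coeff h i + (\<Sum>a<N. coeff g a * coeff h (N+i-a))"
proof -
  have "coeff (g*h) (N+i) = (\<Sum>a\<le>N+i. coeff g a * coeff h (N+i-a))" by (rule coeff_mult)
  also have "\<dots> = (\<Sum>a\<in>{..<N} \<union> {N} \<union> {N<..N+i}. coeff g a * coeff h (N+i-a))"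
    by (rule sum.cong) auto
  also have "\<dots> = (\<Sum>a<N. coeff g a * coeff h (N+i-a)) + coeff h i
       + (\<Sum>a\<in>{N<..N+i}. coeff g a * coeff h (N+i-a))"
    using assms by (subst sum.union_disjoint; auto)+
  also have "(\<Sum>a\<in>{N<..N+i}. coeff g a * coeff h (N+i-a)) = 0"
    using assms by (intro sum.neutral) (auto simp: coeff_eq_0)
  finally show ?thesis by simp
qed

lemma monic_cofactor:
  fixes f g h :: "'a::idom poly"
  assumes "f = g * h" "degree f = N + E" "coeff f (N+E) = 1" "degree g = N" "coeff g N = 1"
  shows "degree h = E" "coeff h E = 1"
proof -
  have "g \<noteq> 0" "h \<noteq> 0" using assms(1,3) by auto
  then have dh: "degree f = N + degree h" using assms(1,4) by (simp add: degree_mult_eq)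
  then show "degree h = E" using assms(2) by simp
  have "lead_coeff f = lead_coeff g * lead_coeff h" using assms(1) by (simp add: lead_coeff_mult)
  then show "coeff h E = 1" using assms dh by simp
qed

lemma monic_cofactor_real:
  fixes f g h :: "complex poly"
  assumes "f = g * h" "degree g = N" "coeff g N = 1" "\<forall>a. coeff f a \<in> \<real>" "\<forall>a. coeff g a \<in> \<real>"
    "degree h = E" "coeff h E = 1"
  shows "coeff h a \<in> \<real>"
proof (induction a rule: strong_downward_induct[where e = E])
  case (1 a)
  then show ?case using assms(6,7) by (cases "a = E") (auto simp: coeff_eq_0)
next
  case (2 a)
  have "coeff h a = coeff f (N+a) - (\<Sum>b<N. coeff g b * coeff h (N+a-b))"
    using coeff_monic_mult_shift[OF assms(2,3), of h a] assms(1) by simp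
  also have "\<dots> \<in> \<real>" using assms(4,5) 2
    by (intro Reals_diff sum_in_Reals Reals_mult) auto
  finally show ?case .
qed

lemma coeff_poly_of: "coeff (poly_of d a) i = (if i = d then 1 else if i < d then a i else 0)"
proof -
  have "coeff (poly_of d a) i = (if d = i then 1 else 0) + (\<Sum>j<d. if j = i then a j else 0)"
    unfolding poly_of_def by (simp add: coeff_sum coeff_monom)
  then show ?thesis by (auto simp: sum.delta)
qed

lemma degree_poly_of: "degree (poly_of d a) = d"
proof (rule antisym)
  show "degree (poly_of d a) \<le> d" by (rule degree_le) (auto simp: coeff_poly_of)
  show "d \<le> degree (poly_of d a)" by (rule le_degree) (simp add: coeff_poly_of)
qed

lemma poly_of_nonzero: "poly_of d a \<noteq> 0"
  using coeff_poly_of[of d a d] by auto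

lemma poly_of_coeff:
  assumes "degree p = d" "coeff p d = 1"
  shows "poly_of d (coeff p) = p"
  by (rule poly_eqI) (auto simp: coeff_poly_of assms coeff_eq_0)

lemma poly_of_cong: "(\<And>i. i < d \<Longrightarrow> a i = b i) \<Longrightarrow> poly_of d a = poly_of d b"
  by (rule poly_eqI) (auto simp: coeff_poly_of)

lemma poly_of_root_bound:
  assumes "poly (poly_of d a) z = 0"
  shows "norm z \<le> 1 + (\<Sum>i<d. norm (a i))"
proof (cases "norm z \<le> 1 \<or> d = 0")
  case True
  have "0 \<le> (\<Sum>i<d. norm (a i))" by (simp add: sum_nonneg)
  then show ?thesis using True assms by (auto simp: poly_of_def)
next
  case False
  then obtain d' where d': "d = Suc d'" by (cases d) auto
  have "z ^ d = - (\<Sum>i<d. a i * z ^ i)" using assms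
    by (simp add: poly_of_def poly_sum poly_monom eq_neg_iff_add_eq_0)
  then have "norm z ^ d = norm (\<Sum>i<d. a i * z ^ i)"
    by (simp only: norm_power[symmetric] norm_minus_cancel)
  also have "\<dots> \<le> (\<Sum>i<d. norm (a i) * norm z ^ i)"
    by (rule order_trans[OF norm_sum]) (simp add: norm_mult norm_power)
  also have "\<dots> \<le> (\<Sum>i<d. norm (a i) * norm z ^ d')"
    using False d' by (intro sum_mono mult_left_mono power_increasing) auto
  also have "\<dots> = (\<Sum>i<d. norm (a i)) * norm z ^ d'" by (simp add: sum_distrib_right)
  finally have "norm z * norm z ^ d' \<le> (\<Sum>i<d. norm (a i)) * norm z ^ d'" using d' by simp
  moreover have "norm z ^ d' > 0" using False by (intro zero_less_power) linarith
  ultimately have "norm z \<le> (\<Sum>i<d. norm (a i))" by (simp add: mult_le_cancel_right)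
  then show ?thesis by simp
qed

lemma degree_pderiv_funpow_le: "degree ((pderiv^^i) (p :: complex poly)) \<le> degree p"
  by (induction i) (auto simp: degree_pderiv intro: le_trans)

lemma poly_eq_sum_upto_degree_bound:
  fixes p :: "complex poly"
  assumes "degree p \<le> D"
  shows "poly p z = (\<Sum>i\<le>D. coeff p i * z ^ i)"
proof -
  have "poly p z = (\<Sum>i\<le>degree p. coeff p i * z ^ i)" by (simp add: poly_altdef)
  also have "\<dots> = (\<Sum>i\<le>D. coeff p i * z ^ i)"
    using assms by (intro sum.mono_neutral_left) (auto simp: coeff_eq_0)
  finally show ?thesis .
qed

section \<open>Coefficientwise convergence of polynomials\<close>

definition coeffs_tendsto :: "(nat \<Rightarrow> 'a::{zero,topological_space} poly) \<Rightarrow> 'a poly \<Rightarrow> bool" where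
  "coeffs_tendsto P p \<longleftrightarrow> (\<forall>i. (\<lambda>n. coeff (P n) i) \<longlonglongrightarrow> coeff p i)"

lemma coeffs_tendsto_const: "coeffs_tendsto (\<lambda>n. p) p"
  by (simp add: coeffs_tendsto_def)

lemma coeffs_tendsto_mult:
  fixes P Q :: "nat \<Rightarrow> 'a::{comm_semiring_0,topological_semigroup_mult,topological_comm_monoid_add} poly"
  shows "coeffs_tendsto P p \<Longrightarrow> coeffs_tendsto Q q \<Longrightarrow> coeffs_tendsto (\<lambda>n. P n * Q n) (p * q)"
  unfolding coeffs_tendsto_def coeff_mult by (auto intro!: tendsto_sum tendsto_mult)

lemma coeffs_tendsto_power:
  fixes P :: "nat \<Rightarrow> 'a::{comm_semiring_1,topological_semigroup_mult,topological_comm_monoid_add} poly"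
  shows "coeffs_tendsto P p \<Longrightarrow> coeffs_tendsto (\<lambda>n. P n ^ k) (p ^ k)"
  by (induction k) (auto intro: coeffs_tendsto_mult coeffs_tendsto_const)

lemma coeffs_tendsto_prod:
  fixes F :: "'b \<Rightarrow> nat \<Rightarrow> 'a::{comm_semiring_1,topological_semigroup_mult,topological_comm_monoid_add} poly"
  assumes "finite A" "\<And>r. r \<in> A \<Longrightarrow> coeffs_tendsto (F r) (f r)"
  shows "coeffs_tendsto (\<lambda>n. \<Prod>r\<in>A. F r n) (\<Prod>r\<in>A. f r)"
  using assms by (induction A rule: finite_induct) (auto intro: coeffs_tendsto_mult coeffs_tendsto_const)

lemma coeffs_tendsto_linear:
  fixes X :: "nat \<Rightarrow> 'a::{comm_ring_1,topological_group_add}"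
  assumes "X \<longlonglongrightarrow> x"
  shows "coeffs_tendsto (\<lambda>n. [:- X n, 1:]) [:- x, 1:]"
  unfolding coeffs_tendsto_def
proof
  fix i
  show "(\<lambda>n. coeff [:- X n, 1:] i) \<longlonglongrightarrow> coeff [:- x, 1:] i"
    using assms by (cases i) (auto simp: coeff_pCons intro: tendsto_minus split: nat.split)
qed

lemma coeffs_tendsto_pderiv:
  fixes P :: "nat \<Rightarrow> 'a::real_normed_field poly"
  shows "coeffs_tendsto P p \<Longrightarrow> coeffs_tendsto (\<lambda>n. pderiv (P n)) (pderiv p)"
  unfolding coeffs_tendsto_def coeff_pderiv by (auto intro: tendsto_mult)

lemma coeffs_tendsto_pderiv_funpow:
  fixes P :: "nat \<Rightarrow> 'a::real_normed_field poly"
  shows "coeffs_tendsto P p \<Longrightarrow> coeffs_tendsto (\<lambda>n. (pderiv^^i) (P n)) ((pderiv^^i) p)"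
  by (induction i) (auto intro: coeffs_tendsto_pderiv)

lemma coeffs_tendsto_poly_of:
  "(\<And>i. i < d \<Longrightarrow> (\<lambda>n. A n i) \<longlonglongrightarrow> a i) \<Longrightarrow> coeffs_tendsto (\<lambda>n. poly_of d (A n)) (poly_of d a)"
  unfolding coeffs_tendsto_def coeff_poly_of by auto

lemma tendsto_poly_if_coeffs_tendsto:
  fixes P :: "nat \<Rightarrow> complex poly"
  assumes "coeffs_tendsto P p" "\<And>n. degree (P n) \<le> D" "degree p \<le> D" "Z \<longlonglongrightarrow> z"
  shows "(\<lambda>n. poly (P n) (Z n)) \<longlonglongrightarrow> poly p z"
proof -
  have "(\<lambda>n. \<Sum>i\<le>D. coeff (P n) i * Z n ^ i) \<longlonglongrightarrow> (\<Sum>i\<le>D. coeff p i * z ^ i)"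
    using assms(1,4) unfolding coeffs_tendsto_def by (auto intro!: tendsto_sum tendsto_mult tendsto_power)
  moreover have "poly (P n) (Z n) = (\<Sum>i\<le>D. coeff (P n) i * Z n ^ i)" for n
    using assms(2) by (rule poly_eq_sum_upto_degree_bound)
  ultimately show ?thesis using poly_eq_sum_upto_degree_bound[OF assms(3)] by simp
qed

text \<open>The coefficients of the cofactor are recovered from the top down, each from the product
  and the higher ones.\<close>

lemma coeffs_tendsto_monic_cofactor:
  fixes G H :: "nat \<Rightarrow> complex poly"
  assumes G: "coeffs_tendsto G g" and GN: "\<And>n. degree (G n) = N" "\<And>n. coeff (G n) N = 1"
    and HH: "\<And>n j. e \<le> j \<Longrightarrow> coeff (H n) j = coeff h j"
    and F: "coeffs_tendsto (\<lambda>n. G n * H n) (g * h)"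
  shows "coeffs_tendsto H h"
proof -
  have gN: "coeff g N = 1" "degree g = N"
  proof -
    have "(\<lambda>n. coeff (G n) N) \<longlonglongrightarrow> coeff g N" using G by (simp add: coeffs_tendsto_def)
    moreover have "(\<lambda>n. coeff (G n) N) \<longlonglongrightarrow> 1" using GN(2) by simp
    ultimately show c1: "coeff g N = 1" using LIMSEQ_unique by blast
    have "coeff g j = 0" if "N < j" for j
    proof -
      have "(\<lambda>n. coeff (G n) j) \<longlonglongrightarrow> coeff g j" using G by (simp add: coeffs_tendsto_def)
      moreover have "coeff (G n) j = 0" for n using GN(1) \<open>N < j\<close> by (simp add: coeff_eq_0)
      then have "(\<lambda>n. coeff (G n) j) \<longlonglongrightarrow> 0" by simp
      ultimately show "coeff g j = 0" using LIMSEQ_unique by blast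
    qed
    then show "degree g = N" using c1 by (intro antisym degree_le le_degree) auto
  qed
  show ?thesis
    unfolding coeffs_tendsto_def
  proof
    fix i
    show "(\<lambda>n. coeff (H n) i) \<longlonglongrightarrow> coeff h i"
    proof (induction i rule: strong_downward_induct[where e = e])
      case (1 i) then show ?case using HH by simp
    next
      case (2 i)
      have "(\<lambda>n. coeff (G n * H n) (N+i) - (\<Sum>a<N. coeff (G n) a * coeff (H n) (N+i-a)))
            \<longlonglongrightarrow> coeff (g * h) (N+i) - (\<Sum>a<N. coeff g a * coeff h (N+i-a))"
        using F G 2 by (auto simp: coeffs_tendsto_def intro!: tendsto_diff tendsto_sum tendsto_mult)
      moreover have "coeff (H n) i = coeff (G n * H n) (N+i) - (\<Sum>a<N. coeff (G n) a * coeff (H n) (N+i-a))" for n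
        using coeff_monic_mult_shift[OF GN(1,2)] by simp
      moreover have "coeff h i = coeff (g * h) (N+i) - (\<Sum>a<N. coeff g a * coeff h (N+i-a))"
        using coeff_monic_mult_shift[OF gN(2,1)] by simp
      ultimately show ?case by (simp only:)
    qed
  qed
qed

section \<open>Affine independence, limits and compactness\<close>

lemma tendsto_fun_iff_componentwise:
  fixes f :: "'a \<Rightarrow> 'b \<Rightarrow> 'c::topological_space"
  shows "(f \<longlongrightarrow> l) F \<longleftrightarrow> (\<forall>i. ((\<lambda>x. f x i) \<longlongrightarrow> l i) F)"
  using limitin_componentwise[of "\<lambda>_. euclidean" UNIV f l F]
  by (simp add: euclidean_product_topology flip: limitin_canonical_iff)

lemma affine_independent_coeffs_unique:
  fixes A :: "'a::euclidean_space set"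
  assumes "\<not> affine_dependent A" "T \<subseteq> A" "finite T" "sum w T = sum w' T"
    "(\<Sum>a\<in>T. w a *\<^sub>R a) = (\<Sum>a\<in>T. w' a *\<^sub>R a)" "a \<in> T"
  shows "w a = w' a"
proof (rule ccontr)
  assume ne: "w a \<noteq> w' a"
  have "affine_dependent A"
    unfolding affine_dependent_explicit
  proof (intro exI conjI)
    show "finite T" "T \<subseteq> A" by fact+
    show "sum (\<lambda>b. w b - w' b) T = 0" using assms(4) by (simp add: sum_subtractf)
    show "\<exists>v\<in>T. w v - w' v \<noteq> 0" using ne assms(6) by auto
    show "(\<Sum>b\<in>T. (w b - w' b) *\<^sub>R b) = 0" using assms(5)
      by (simp add: scaleR_diff_left sum_subtractf)
  qed
  then show False using assms(1) by simp
qed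
lemma affine_independent_convex_hull_support:
  fixes A :: "'a::euclidean_space set"
  assumes A: "\<not> affine_dependent A" and T: "T \<subseteq> A" and w: "\<forall>a\<in>T. w a > 0" "sum w T = 1"
    and u: "u = (\<Sum>a\<in>T. w a *\<^sub>R a)" and T': "T' \<subseteq> A" "u \<in> convex hull T'"
  shows "T \<subseteq> T'"
proof -
  have fT: "finite T" "finite T'" using A T T' aff_independent_finite finite_subset by blast+
  have "u \<in> convex hull T" unfolding convex_hull_finite[OF fT(1)] using w u
    by (auto intro!: exI[of _ w] less_imp_le)
  moreover have "\<not> affine_dependent (T \<union> T')" using A T T' affine_dependent_subset by blast
  ultimately have "u \<in> convex hull (T \<inter> T')" using T' convex_hull_Int by blast
  then obtain c where c: "\<forall>x\<in>T\<inter>T'. 0 \<le> c x" "sum c (T\<inter>T') = 1" "(\<Sum>x\<in>T\<inter>T'. c x *\<^sub>R x) = u"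
    unfolding convex_hull_finite[OF finite_Int[OF disjI1[OF fT(1)]]] by auto
  define c' where "c' x = (if x \<in> T' then c x else 0)" for x
  have sum_c': "sum c' T = 1" using fT c unfolding c'_def by (simp add: sum.inter_restrict)
  have "(\<Sum>x\<in>T. c' x *\<^sub>R x) = (\<Sum>x\<in>T. if x \<in> T' then c x *\<^sub>R x else 0)"
    unfolding c'_def by (intro sum.cong) auto
  then have comb_c': "(\<Sum>x\<in>T. c' x *\<^sub>R x) = u" using fT c by (simp add: sum.inter_restrict)
  have "w a = c' a" if "a \<in> T" for a
    by (rule affine_independent_coeffs_unique[OF A T fT(1) _ _ that]) (use w u sum_c' comb_c' in auto)
  then show ?thesis using w unfolding c'_def by (auto split: if_splits)
qed

lemma affine_independent_coeffs_unique_indexed: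
  fixes p :: "nat \<Rightarrow> 'a::euclidean_space"
  assumes "\<not> affine_dependent A" "p ` {..<k} \<subseteq> A" "inj_on p {..<k}"
    "(\<Sum>r<k. t r) = (\<Sum>r<k. t' r)" "(\<Sum>r<k. t r *\<^sub>R p r) = (\<Sum>r<k. t' r *\<^sub>R p r)" "r < k"
  shows "t r = t' r"
proof -
  define q where "q = inv_into {..<k} p"
  have qp: "q (p s) = s" if "s < k" for s using assms(3) that by (simp add: q_def)
  have "(t \<circ> q) (p r) = (t' \<circ> q) (p r)"
  proof (rule affine_independent_coeffs_unique[OF assms(1,2)])
    show "sum (t \<circ> q) (p ` {..<k}) = sum (t' \<circ> q) (p ` {..<k})"
      using assms(3,4) qp by (simp add: sum.reindex)
    show "(\<Sum>a\<in>p ` {..<k}. (t \<circ> q) a *\<^sub>R a) = (\<Sum>a\<in>p ` {..<k}. (t' \<circ> q) a *\<^sub>R a)"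
      using assms(3,5) qp by (simp add: sum.reindex)
  qed (use assms(6) in auto)
  then show ?thesis using qp assms(6) by simp
qed

lemma affine_independent_convex_hull_support_indexed:
  fixes p :: "nat \<Rightarrow> 'a::euclidean_space"
  assumes A: "\<not> affine_dependent A" "p ` {..<k} \<subseteq> A" "inj_on p {..<k}"
    and t: "\<forall>r<k. t r > 0" "(\<Sum>r<k. t r) = 1" and u: "u = (\<Sum>r<k. t r *\<^sub>R p r)"
    and T': "T' \<subseteq> A" "u \<in> convex hull T'"
  shows "p ` {..<k} \<subseteq> T'"
proof -
  define q where "q = inv_into {..<k} p"
  have qp: "q (p s) = s" if "s < k" for s using A(3) that by (simp add: q_def)
  show ?thesis
  proof (rule affine_independent_convex_hull_support[OF A(1,2) _ _ _ T'])
    show "\<forall>a\<in>p ` {..<k}. (t \<circ> q) a > 0" using t qp by auto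
    show "sum (t \<circ> q) (p ` {..<k}) = 1" using A(3) t qp by (simp add: sum.reindex)
    show "u = (\<Sum>a\<in>p ` {..<k}. (t \<circ> q) a *\<^sub>R a)" using A(3) u qp by (simp add: sum.reindex)
  qed
qed

lemma tendsto_if_subseq_limits_eq:
  fixes a :: "nat \<Rightarrow> 'a::metric_space"
  assumes C: "compact C" "\<forall>n. a n \<in> C"
    and H: "\<And>s l. strict_mono s \<Longrightarrow> (a \<circ> s) \<longlonglongrightarrow> l \<Longrightarrow> l = a0"
  shows "a \<longlonglongrightarrow> a0"
proof (rule ccontr)
  assume "\<not> a \<longlonglongrightarrow> a0"
  then obtain e where e: "e > 0" "\<forall>N. \<exists>n\<ge>N. \<not> dist (a n) a0 < e"
    unfolding lim_sequentially by blast
  define S where "S = {n. \<not> dist (a n) a0 < e}"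
  have "infinite S" unfolding infinite_nat_iff_unbounded_le S_def mem_Collect_eq using e(2) by blast
  then obtain r :: "nat \<Rightarrow> nat" where r: "strict_mono r" "\<forall>n. r n \<in> S" using infinite_enumerate by blast
  have "\<forall>n. (a \<circ> r) n \<in> C" using C(2) by simp
  with compact_imp_seq_compact[OF C(1)]
  obtain l q where lq: "l \<in> C" "strict_mono q" "((a \<circ> r) \<circ> q) \<longlonglongrightarrow> l"
    by (rule seq_compactE)
  have "(a \<circ> (r \<circ> q)) \<longlonglongrightarrow> l" using lq(3) by (simp add: comp_assoc)
  then have "l = a0" using H strict_mono_o[OF r(1) lq(2)] by blast
  then obtain N where "\<forall>n\<ge>N. dist (a (r (q n))) a0 < e"
    using lq(3) e(1) unfolding lim_sequentially by auto
  then show False using r(2) unfolding S_def by blast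
qed

lemma compact_fun_box:
  fixes S :: "'a \<Rightarrow> real set"
  assumes "\<And>r. compact (S r)"
  shows "compact {x. \<forall>r. x r \<in> S r}"
proof -
  have "compactin (product_topology (\<lambda>_. euclidean) UNIV) (PiE UNIV S)"
    using assms by (simp add: compactin_PiE compactin_euclidean_iff)
  moreover have "PiE UNIV S = {x. \<forall>r. x r \<in> S r}" by (auto simp: PiE_def Pi_def)
  ultimately show ?thesis by (simp add: euclidean_product_topology compactin_euclidean_iff)
qed

section \<open>Configuration spaces and trivial bundles\<close>

definition chamber :: "nat \<Rightarrow> (nat \<Rightarrow> real) set" where
  "chamber k = {x. (\<forall>a b. a < b \<longrightarrow> b < k \<longrightarrow> x a < x b) \<and> (\<forall>r\<ge>k. x r = 0)}"

definition sorted_coords :: "nat \<Rightarrow> real set \<Rightarrow> nat \<Rightarrow> real" where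
  "sorted_coords k S = (\<lambda>i. if i < k then sorted_list_of_set S ! i else 0)"

lemma inj_on_chamber: assumes "x \<in> chamber k" shows "inj_on x {..<k}"
proof (rule inj_onI)
  fix a b assume ab: "a \<in> {..<k}" "b \<in> {..<k}" "x a = x b"
  have "\<And>a b. a < b \<Longrightarrow> b < k \<Longrightarrow> x a < x b" using assms unfolding chamber_def by blast
  then show "a = b" using ab by (cases a b rule: linorder_cases) force+
qed

lemma sorted_coords_chamber:
  assumes x: "x \<in> chamber k"
  shows "sorted_coords k (x ` {..<k}) = x"
proof -
  have "sorted_wrt (<) (map x [0..<k])"
    using x unfolding chamber_def by (auto simp: sorted_wrt_iff_nth_less)
  then have "sorted (map x [0..<k])" "distinct (map x [0..<k])"
    using strict_sorted_iff by auto
  moreover have "set (map x [0..<k]) = x ` {..<k}" by auto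
  ultimately have "sorted_list_of_set (x ` {..<k}) = map x [0..<k]"
    by (metis sorted_list_of_set.idem_if_sorted_distinct)
  then show ?thesis using x unfolding sorted_coords_def chamber_def by auto
qed

lemma chamber_eqI:
  assumes "x \<in> chamber k" "x' \<in> chamber k" "x ` {..<k} = x' ` {..<k}"
  shows "x = x'"
proof -
  have "x = sorted_coords k (x ` {..<k})" using sorted_coords_chamber[OF assms(1)] by simp
  also have "\<dots> = x'" using assms(3) sorted_coords_chamber[OF assms(2)] by simp
  finally show ?thesis .
qed

lemma sorted_coords_in_chamber:
  assumes "S \<in> Conf k"
  shows "sorted_coords k S \<in> chamber k" "sorted_coords k S ` {..<k} = S"
proof -
  have S: "finite S" "card S = k" using assms by (auto simp: Conf_def)
  have L: "length (sorted_list_of_set S) = k" "sorted_wrt (<) (sorted_list_of_set S)"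
    using S by auto
  show "sorted_coords k S \<in> chamber k" unfolding chamber_def sorted_coords_def using L
    by (auto simp: sorted_wrt_iff_nth_less)
  have "sorted_coords k S ` {..<k} = set (sorted_list_of_set S)" unfolding sorted_coords_def using L(1)
    by (auto simp: in_set_conv_nth image_iff)
  then show "sorted_coords k S ` {..<k} = S" using S by simp
qed

lemma Conf_top_homeomorphic_chamber: "Conf_top k homeomorphic_space subtopology euclidean (chamber k)"
proof -
  have sc: "(\<lambda>S i. if i < k then sorted_list_of_set S ! i else 0) = sorted_coords k"
    by (simp add: sorted_coords_def fun_eq_iff)
  have top: "topspace (Conf_top k) = Conf k"
    unfolding Conf_top_def by (simp add: topspace_pullback_topology)
  have "continuous_map (Conf_top k) (subtopology euclidean (chamber k)) (sorted_coords k)"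
  proof (rule continuous_map_into_subtopology)
    have "continuous_map (pullback_topology (Conf k) (sorted_coords k) euclidean) euclidean (id \<circ> sorted_coords k)"
      by (rule continuous_map_pullback) simp
    then show "continuous_map (Conf_top k) euclidean (sorted_coords k)" unfolding Conf_top_def sc by simp
    show "sorted_coords k \<in> topspace (Conf_top k) \<rightarrow> chamber k" using top sorted_coords_in_chamber by auto
  qed
  moreover have "continuous_map (subtopology euclidean (chamber k)) (Conf_top k) (\<lambda>x. x ` {..<k})"
    unfolding Conf_top_def sc
  proof (rule continuous_map_pullback')
    show "continuous_map (subtopology euclidean (chamber k)) euclidean (sorted_coords k \<circ> (\<lambda>x. x ` {..<k}))"
      by (rule continuous_map_eq[of _ _ id]) (simp_all add: sorted_coords_chamber)
    show "topspace (subtopology euclidean (chamber k)) \<subseteq> (\<lambda>x. x ` {..<k}) -` Conf k"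
      using inj_on_chamber by (auto simp: Conf_def card_image)
  qed
  ultimately have "homeomorphic_maps (Conf_top k) (subtopology euclidean (chamber k))
      (sorted_coords k) (\<lambda>x. x ` {..<k})"
    unfolding homeomorphic_maps_def using top sorted_coords_in_chamber sorted_coords_chamber by auto
  then show ?thesis unfolding homeomorphic_space_def by blast
qed

lemma real_affine_bundle_if_homeomorphic_product:
  fixes D :: "'a::topological_space set"
  assumes "subtopology euclidean D homeomorphic_space prod_topology B (subtopology euclidean (Rl l))"
  shows "\<exists>(E :: 'a topology) p. real_affine_bundle E B p l \<and> subtopology euclidean D homeomorphic_space E"
proof -
  define E where "E = subtopology euclidean D"
  obtain h where h: "homeomorphic_map E (prod_topology B (subtopology euclidean (Rl l))) h"
    using assms unfolding E_def homeomorphic_space by blast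
  define p where "p = fst \<circ> h"
  have "h ` topspace E = topspace B \<times> Rl l"
    using h homeomorphic_imp_surjective_map by fastforce
  moreover have "(\<lambda>_. 0) \<in> Rl l" by (simp add: Rl_def)
  ultimately have surj: "p ` topspace E = topspace B"
    unfolding p_def image_comp[symmetric] by (auto simp: fst_image_times)
  then have "{e \<in> topspace E. p e \<in> topspace B} = topspace E" by blast
  then have "local_triv E B p l (topspace B) h"
    unfolding local_triv_def using h by (simp add: p_def)
  moreover have "continuous_map E B p"
    unfolding p_def using h homeomorphic_imp_continuous_map continuous_map_fst continuous_map_compose by blast
  moreover have "affine_bij_Rl l id" by (simp add: affine_bij_Rl_def)
  ultimately have "real_affine_bundle E B p l"
    unfolding real_affine_bundle_def using surj by (intro conjI exI[of _ "{(topspace B, h)}"]) auto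
  then show ?thesis unfolding E_def using homeomorphic_space_refl by blast
qed

definition coeffs_in :: "complex set \<Rightarrow> complex poly \<Rightarrow> bool" where
  "coeffs_in K p \<longleftrightarrow> (\<forall>j. coeff p j \<in> K)"

lemma coeffs_in_mult:
  "K = \<real> \<or> K = UNIV \<Longrightarrow> coeffs_in K p \<Longrightarrow> coeffs_in K q \<Longrightarrow> coeffs_in K (p * q)"
  unfolding coeffs_in_def coeff_mult by (auto intro!: sum_in_Reals Reals_mult)

lemma coeffs_in_prod:
  assumes "K = \<real> \<or> K = UNIV" "\<And>r. r \<in> A \<Longrightarrow> coeffs_in K (f r)"
  shows "coeffs_in K (prod f A)"
  using assms
proof (induction A rule: infinite_finite_induct)
  case (insert a A) then show ?case using coeffs_in_mult by simp
qed (auto simp: coeffs_in_def coeff_1)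

lemma coeffs_in_power: "K = \<real> \<or> K = UNIV \<Longrightarrow> coeffs_in K p \<Longrightarrow> coeffs_in K (p ^ r)"
  using coeffs_in_prod[of K "{..<r}" "\<lambda>_. p"] by simp

lemma coeffs_in_real_linear: "K = \<real> \<or> K = UNIV \<Longrightarrow> coeffs_in K [:- complex_of_real a, 1:]"
  by (auto simp: coeffs_in_def coeff_pCons split: nat.split)

lemma dimK_cases: "K = \<real> \<or> K = UNIV \<Longrightarrow> (K = \<real> \<and> dimK K = 1) \<or> (K = UNIV \<and> dimK K = 2)"
proof -
  have "\<i> \<notin> \<real>" by (simp add: complex_is_Real_iff)
  then have "(UNIV::complex set) \<noteq> \<real>" by blast
  then show "K = \<real> \<or> K = UNIV \<Longrightarrow> ?thesis" by (auto simp: dimK_def)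
qed

section \<open>The stratum \<open>X\<^sub>k - X\<^sub>k\<^sub>-\<^sub>1\<close>\<close>

locale stratum_setup =
  fixes K :: "complex set" and d m n k :: nat
    and i :: "(nat \<Rightarrow> nat \<Rightarrow> complex) \<times> real \<Rightarrow> real ^ 'N"
  assumes K: "K = \<real> \<or> K = UNIV" and m1: "m \<ge> 1" and n1: "n \<ge> 1"
    and nd: "nondegenerate_resolution (subtopology euclidean (Z_taut K d m n)) (Sigma_disc K d m n) fst i"
    and k1: "1 \<le> k" and kd: "k \<le> d div n"
begin

abbreviation "Z \<equiv> Z_taut K d m n"
abbreviation "Y \<equiv> Sigma_disc K d m n"

definition "filt j = resolution_filt (subtopology euclidean Z) Y fst i j"
definition "stratum = filt k - filt (k - 1)"

definition "e = d - n * k"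
definition "dK = dimK K"
definition "ncoeffs = dK * m * e"
definition "fdim = ncoeffs + k - 1"

text \<open>The stratum is parametrised by the common roots \<open>x\<close>, listed increasingly, and a vector
  \<open>v \<in> \<real>\<^sup>fdim\<close>. The first \<open>ncoeffs\<close> coordinates of \<open>v\<close> are the real coefficients of the
  monic cofactors \<open>h\<^sub>j\<close> of degree \<open>e\<close> (real and imaginary parts interleaved if \<open>K = \<complex>\<close>);
  the remaining \<open>k - 1\<close> are the logarithms \<open>ln (t\<^sub>r / t\<^sub>k\<^sub>-\<^sub>1)\<close> of the ratios of the
  barycentric weights \<open>t\<close>, which the softmax \<open>weight\<close> recovers.\<close>

definition root_factor :: "(nat \<Rightarrow> real) \<Rightarrow> complex poly" where
  "root_factor x = (\<Prod>r<k. [:- complex_of_real (x r), 1:] ^ n)"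

definition cofactor_coeff :: "(nat \<Rightarrow> real) \<Rightarrow> nat \<Rightarrow> nat \<Rightarrow> complex" where
  "cofactor_coeff v j a = Complex (v (dK * (j * e + a))) (if dK = 2 then v (dK * (j * e + a) + 1) else 0)"

definition cofactor :: "(nat \<Rightarrow> real) \<Rightarrow> nat \<Rightarrow> complex poly" where
  "cofactor v j = poly_of e (cofactor_coeff v j)"

definition tuple :: "(nat \<Rightarrow> real) \<Rightarrow> (nat \<Rightarrow> real) \<Rightarrow> nat \<Rightarrow> nat \<Rightarrow> complex" where
  "tuple x v = (\<lambda>j a. if j < m \<and> a < d then coeff (root_factor x * cofactor v j) a else 0)"

definition exp_weight :: "(nat \<Rightarrow> real) \<Rightarrow> nat \<Rightarrow> real" where
  "exp_weight v r = (if Suc r < k then exp (v (ncoeffs + r)) else 1)"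

definition weight :: "(nat \<Rightarrow> real) \<Rightarrow> nat \<Rightarrow> real" where
  "weight v r = (if r < k then exp_weight v r / (\<Sum>s<k. exp_weight v s) else 0)"

definition param :: "(nat \<Rightarrow> real) \<times> (nat \<Rightarrow> real) \<Rightarrow> (nat \<Rightarrow> nat \<Rightarrow> complex) \<times> (real ^ 'N)" where
  "param = (\<lambda>(x, v). (tuple x v, \<Sum>r<k. weight v r *\<^sub>R i (tuple x v, x r)))"

definition "param_dom = chamber k \<times> Rl fdim"

lemma param_eq: "param (x, v) = (tuple x v, \<Sum>r<k. weight v r *\<^sub>R i (tuple x v, x r))"
  by (simp add: param_def)

lemma d_eq: "d = n * k + e"
proof -
  have "n * k \<le> n * (d div n)" using kd by simp
  also have "\<dots> \<le> d" by simp
  finally show ?thesis unfolding e_def by simp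
qed

lemma continuous_on_i: "continuous_on Z i"
proof -
  have "embedding_map (subtopology euclidean Z) euclidean i"
    using nd by (simp add: nondegenerate_resolution_def)
  then have "continuous_map (subtopology euclidean Z) euclidean i"
    unfolding embedding_map_def using homeomorphic_imp_continuous_map continuous_map_in_subtopology by blast
  then show ?thesis by (simp add: continuous_map_iff_continuous)
qed

lemma inj_on_i: "inj_on i Z"
proof -
  have "embedding_map (subtopology euclidean Z) euclidean i"
    using nd by (simp add: nondegenerate_resolution_def)
  then show ?thesis unfolding embedding_map_def using homeomorphic_imp_injective_map by fastforce
qed

lemma affine_independent_fibre: "y \<in> Y \<Longrightarrow> \<not> affine_dependent (i ` {z \<in> Z. fst z = y})"
  using nd by (simp add: nondegenerate_resolution_def)

lemma mem_filt_iff: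
  "(y, u) \<in> filt j \<longleftrightarrow>
     y \<in> Y \<and> (\<exists>S. S \<subseteq> i ` {z \<in> Z. fst z = y} \<and> finite S \<and> card S \<le> j \<and> u \<in> convex hull S)"
  by (simp add: filt_def resolution_filt_def)

lemma root_factor_dvd: "r < k \<Longrightarrow> [:- complex_of_real (x r), 1:] ^ n dvd root_factor x"
  unfolding root_factor_def by (rule dvd_prodI) auto

lemma root_factor_monic: "degree (root_factor x) = n * k" "coeff (root_factor x) (n * k) = 1"
proof -
  show deg: "degree (root_factor x) = n * k" unfolding root_factor_def
    by (subst degree_prod_sum_eq) (auto simp: degree_power_eq)
  have "lead_coeff (root_factor x) = 1"
    unfolding root_factor_def lead_coeff_prod lead_coeff_power by simp
  then show "coeff (root_factor x) (n * k) = 1" using deg by simp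
qed

lemma root_factor_nonzero: "root_factor x \<noteq> 0"
  using root_factor_monic(2)[of x] by auto

lemma coeffs_in_root_factor: "coeffs_in K (root_factor x)"
  unfolding root_factor_def by (intro coeffs_in_prod coeffs_in_power coeffs_in_real_linear K)

lemma poly_root_factor_root: "r < k \<Longrightarrow> poly (root_factor x) (complex_of_real (x r)) = 0"
  using root_factor_dvd[of r x] n1
  by (metis dvd_power dvd_trans not_one_le_zero neq0_conv poly_eq_0_iff_dvd)

lemma cofactor_monic: "degree (cofactor v j) = e" "coeff (cofactor v j) e = 1"
  unfolding cofactor_def by (simp_all add: degree_poly_of coeff_poly_of)

lemma coeffs_in_cofactor: "coeffs_in K (cofactor v j)"
  using dimK_cases[OF K] unfolding coeffs_in_def cofactor_def coeff_poly_of cofactor_coeff_def dK_def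
  by (auto simp: Complex_in_Reals)

lemma poly_of_tuple: "j < m \<Longrightarrow> poly_of d (tuple x v j) = root_factor x * cofactor v j"
proof -
  assume j: "j < m"
  have "cofactor v j \<noteq> 0" unfolding cofactor_def by (rule poly_of_nonzero)
  then have deg: "degree (root_factor x * cofactor v j) = d"
    using root_factor_nonzero root_factor_monic cofactor_monic d_eq by (simp add: degree_mult_eq)
  have "lead_coeff (root_factor x * cofactor v j) = 1"
    using root_factor_monic cofactor_monic by (simp add: lead_coeff_mult)
  then have "poly_of d (coeff (root_factor x * cofactor v j)) = root_factor x * cofactor v j"
    using deg by (intro poly_of_coeff) simp_all
  moreover have "poly_of d (tuple x v j) = poly_of d (coeff (root_factor x * cofactor v j))"
    by (rule poly_of_cong) (simp add: tuple_def j)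
  ultimately show ?thesis by simp
qed

lemma tuple_roots: "j < m \<Longrightarrow> r < k \<Longrightarrow> boldf_zero n (poly_of d (tuple x v j)) (x r)"
  unfolding boldf_zero_iff_dvd poly_of_tuple by (rule dvd_mult2[OF root_factor_dvd])

lemma tuple_in_Z: "r < k \<Longrightarrow> (tuple x v, x r) \<in> Z"
  and tuple_in_Y: "tuple x v \<in> Y"
proof -
  have "coeff (root_factor x * cofactor v j) a \<in> K" for j a
    using coeffs_in_mult[OF K coeffs_in_root_factor coeffs_in_cofactor] by (simp add: coeffs_in_def)
  then have "tuple x v \<in> PolyTuples K d m"
    using K unfolding PolyTuples_def tuple_def by auto
  moreover have "\<forall>j<m. boldf_zero n (poly_of d (tuple x v j)) (x 0)" using tuple_roots k1 by simp
  ultimately show Y: "tuple x v \<in> Y" unfolding Sigma_disc_def by blast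
  show "(tuple x v, x r) \<in> Z" if "r < k"
    unfolding Z_taut_def using Y tuple_roots that by blast
qed

lemma exp_weight_sum_pos: "(\<Sum>s<k. exp_weight v s) > 0"
  using k1 by (intro sum_pos) (auto simp: exp_weight_def lessThan_empty_iff)

lemma weight_pos: "r < k \<Longrightarrow> weight v r > 0"
  using exp_weight_sum_pos[of v] by (simp add: weight_def exp_weight_def)

lemma weight_sum: "(\<Sum>r<k. weight v r) = 1"
  using exp_weight_sum_pos[of v] by (simp add: weight_def sum_divide_distrib[symmetric])

lemma weight_le_1: "weight v r \<le> 1"
proof (cases "r < k")
  case True
  have "exp_weight v r \<le> (\<Sum>s<k. exp_weight v s)"
    using True by (intro member_le_sum) (auto simp: exp_weight_def)
  then show ?thesis using True exp_weight_sum_pos[of v] by (simp add: weight_def)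
qed (simp add: weight_def)

lemma fibre_points:
  assumes "x \<in> chamber k" "\<forall>r<k. (y, x r) \<in> Z"
  shows "inj_on (\<lambda>r. i (y, x r)) {..<k}" "(\<lambda>r. i (y, x r)) ` {..<k} \<subseteq> i ` {z \<in> Z. fst z = y}"
proof -
  show "inj_on (\<lambda>r. i (y, x r)) {..<k}"
  proof (rule inj_onI)
    fix a b assume ab: "a \<in> {..<k}" "b \<in> {..<k}" "i (y, x a) = i (y, x b)"
    then have "x a = x b" using assms(2) inj_on_i by (auto dest: inj_onD)
    then show "a = b" using inj_on_chamber[OF assms(1)] ab by (auto dest: inj_onD)
  qed
  show "(\<lambda>r. i (y, x r)) ` {..<k} \<subseteq> i ` {z \<in> Z. fst z = y}" using assms(2) by auto
qed

lemma barycentre_in_stratum: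
  assumes x: "x \<in> chamber k" and y: "y \<in> Y" and yZ: "\<forall>r<k. (y, x r) \<in> Z"
    and t: "\<forall>r<k. t r > 0" "(\<Sum>r<k. t r) = 1"
  shows "(y, \<Sum>r<k. t r *\<^sub>R i (y, x r)) \<in> stratum"
proof -
  define p where "p r = i (y, x r)" for r
  define A where "A = i ` {z \<in> Z. fst z = y}"
  define u where "u = (\<Sum>r<k. t r *\<^sub>R p r)"
  have pinj: "inj_on p {..<k}" and pA: "p ` {..<k} \<subseteq> A"
    using fibre_points[OF x yZ] unfolding p_def A_def by auto
  have cardp: "card (p ` {..<k}) = k" using pinj by (simp add: card_image)
  have "u \<in> convex hull (p ` {..<k})" unfolding u_def
    by (rule convex_sum) (use t in \<open>auto intro: less_imp_le hull_inc\<close>)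
  then have "(y, u) \<in> filt k" unfolding mem_filt_iff using y pA cardp unfolding A_def
    by (intro conjI exI[of _ "p ` {..<k}"]) auto
  moreover have "(y, u) \<notin> filt (k - 1)"
  proof
    assume "(y, u) \<in> filt (k - 1)"
    then obtain S where S: "S \<subseteq> A" "finite S" "card S \<le> k - 1" "u \<in> convex hull S"
      unfolding mem_filt_iff A_def by blast
    have "p ` {..<k} \<subseteq> S"
      using affine_independent_convex_hull_support_indexed[OF affine_independent_fibre[OF y] _ pinj t]
        pA S u_def unfolding A_def by blast
    then have "k \<le> card S" using cardp card_mono[OF S(2)] by metis
    then show False using S(3) k1 by linarith
  qed
  ultimately show ?thesis unfolding stratum_def u_def p_def by simp
qed

lemma param_in_stratum: "x \<in> chamber k \<Longrightarrow> param (x, v) \<in> stratum"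
  unfolding param_eq using k1
  by (intro barycentre_in_stratum tuple_in_Y tuple_in_Z weight_pos weight_sum allI impI) auto

definition coords :: "(nat \<Rightarrow> complex poly) \<Rightarrow> (nat \<Rightarrow> real) \<Rightarrow> nat \<Rightarrow> real" where
  "coords h t idx =
    (if idx < ncoeffs then
      (if idx mod dK = 0 then Re (coeff (h (idx div dK div e)) (idx div dK mod e))
       else Im (coeff (h (idx div dK div e)) (idx div dK mod e)))
     else if idx < fdim then ln (t (idx - ncoeffs) / t (k - 1)) else 0)"

lemma dK_cases: "(K = \<real> \<and> dK = 1) \<or> (K = UNIV \<and> dK = 2)"
  using dimK_cases[OF K] by (simp add: dK_def)

lemma ncoeffs_index:
  assumes "idx < ncoeffs"
  shows "idx div dK div e < m" "idx div dK mod e < e" "idx mod dK < dK"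
proof -
  have "idx < m * e * dK" using assms unfolding ncoeffs_def by (simp add: ac_simps)
  then have q: "idx div dK < m * e" using dK_cases div_less_iff_less_mult by auto
  moreover from q have "e > 0" by (cases e) auto
  ultimately show "idx div dK div e < m" "idx div dK mod e < e"
    by (simp_all add: div_less_iff_less_mult)
  show "idx mod dK < dK" using dK_cases by auto
qed

lemma coords_cong:
  assumes "\<And>j. j < m \<Longrightarrow> h j = h' j" "\<And>r. r < k \<Longrightarrow> t r = t' r"
  shows "coords h t = coords h' t'"
proof
  fix idx
  show "coords h t idx = coords h' t' idx"
    using ncoeffs_index(1)[of idx] assms k1 by (simp add: coords_def fdim_def)
qed

lemma coords_cofactor_weight:
  assumes v: "v \<in> Rl fdim"
  shows "coords (cofactor v) (weight v) = v"
proof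
  fix idx
  show "coords (cofactor v) (weight v) idx = v idx"
  proof (cases "idx < ncoeffs")
    case True
    define q where "q = idx div dK"
    define b where "b = idx mod dK"
    have "coeff (cofactor v (q div e)) (q mod e) = Complex (v (dK * q)) (if dK = 2 then v (dK * q + 1) else 0)"
      using ncoeffs_index[OF True] unfolding cofactor_def coeff_poly_of cofactor_coeff_def q_def by simp
    moreover have "idx = dK * q + b" "b = 0 \<or> (dK = 2 \<and> b = 1)"
      using dK_cases ncoeffs_index(3)[OF True] unfolding q_def b_def by auto
    ultimately show ?thesis using True unfolding coords_def q_def[symmetric] b_def[symmetric] by auto
  next
    case False
    have "exp_weight v (k - 1) = 1" by (simp add: exp_weight_def)
    then have "weight v r / weight v (k - 1) = exp_weight v r" if "r < k" for r
      using that k1 exp_weight_sum_pos[of v] by (simp add: weight_def)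
    then show ?thesis
      using False v k1 by (auto simp: coords_def exp_weight_def Rl_def fdim_def)
  qed
qed

lemma coords_in_Rl: "coords h t \<in> Rl fdim"
  using k1 by (auto simp: Rl_def coords_def fdim_def)

lemma cofactor_coords:
  assumes j: "j < m" and h: "degree (h j) = e" "coeff (h j) e = 1" "coeffs_in K (h j)"
  shows "cofactor (coords h t) j = h j"
proof (rule poly_eqI)
  fix a
  show "coeff (cofactor (coords h t) j) a = coeff (h j) a"
  proof (cases "a < e")
    case True
    define q where "q = j * e + a"
    have "j * e + a < Suc j * e" using True by simp
    also have "\<dots> \<le> m * e" using j by (intro mult_le_mono1) simp
    finally have "q < m * e" unfolding q_def .
    then have ql: "dK * q < ncoeffs" "dK * q + 1 < ncoeffs \<or> dK = 1"
      using dK_cases unfolding ncoeffs_def by auto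
    have qd: "q div e = j" "q mod e = a" unfolding q_def using True by auto
    have "coeff (cofactor (coords h t) j) a
        = Complex (coords h t (dK * q)) (if dK = 2 then coords h t (dK * q + 1) else 0)"
      unfolding cofactor_def coeff_poly_of cofactor_coeff_def q_def using True by simp
    also have "\<dots> = coeff (h j) a"
    proof (cases "dK = 1")
      case True
      then have "coeff (h j) a \<in> \<real>" using h(3) dK_cases by (auto simp: coeffs_in_def)
      then show ?thesis using True ql qd by (simp add: coords_def complex_eq_iff complex_is_Real_iff)
    next
      case False
      then have "dK = 2" using dK_cases by auto
      moreover have "(2 * q + 1) div 2 = q" "(2 * q + 1) mod 2 = 1" by auto
      ultimately show ?thesis using ql qd by (simp add: coords_def complex_eq_iff)
    qed
    finally show ?thesis .
  next
    case False
    then show ?thesis using h(1,2) by (auto simp: cofactor_def coeff_poly_of coeff_eq_0)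
  qed
qed

lemma weight_coords:
  assumes t: "\<forall>r<k. t r > 0" "(\<Sum>r<k. t r) = 1" and r: "r < k"
  shows "weight (coords h t) r = t r"
proof -
  have tk: "t (k - 1) > 0" using t k1 by simp
  have ew: "exp_weight (coords h t) r = t r / t (k - 1)" if "r < k" for r
  proof (cases "Suc r < k")
    case True
    then have "exp_weight (coords h t) r = exp (ln (t r / t (k - 1)))"
      by (simp add: exp_weight_def coords_def fdim_def)
    then show ?thesis using t that tk by simp
  next
    case False
    then have "r = k - 1" using that by simp
    then show ?thesis using tk by (simp add: exp_weight_def)
  qed
  then have "(\<Sum>s<k. exp_weight (coords h t) s) = 1 / t (k - 1)"
    using t by (simp add: sum_divide_distrib[symmetric])
  then show ?thesis using r ew tk by (simp add: weight_def)
qed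

text \<open>Fewer vertices, or a vanishing weight, would put the point into \<open>filt (k - 1)\<close>.\<close>

lemma stratum_simplex:
  assumes "(y, u) \<in> stratum"
  obtains S w where "y \<in> Y" "S \<subseteq> i ` {z \<in> Z. fst z = y}" "finite S" "card S = k"
    "\<forall>a\<in>S. w a > 0" "sum w S = 1" "(\<Sum>a\<in>S. w a *\<^sub>R a) = u"
proof -
  define A where "A = i ` {z \<in> Z. fst z = y}"
  have nin: "(y, u) \<notin> filt (k - 1)" using assms by (simp add: stratum_def)
  obtain S where y: "y \<in> Y" and S: "S \<subseteq> A" "finite S" "card S \<le> k" "u \<in> convex hull S"
    using assms unfolding stratum_def Diff_iff mem_filt_iff A_def by blast
  have small: "(y, u) \<in> filt (k - 1)" if "S' \<subseteq> S" "card S' \<le> k - 1" "u \<in> convex hull S'" for S'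
    unfolding mem_filt_iff A_def using y S(1,2) that
    by (intro conjI exI[of _ S']) (auto simp: A_def dest: finite_subset)
  have cS: "card S = k"
  proof (rule ccontr)
    assume "card S \<noteq> k"
    then show False using small[of S] S(3,4) nin by simp
  qed
  obtain w where w: "\<forall>a\<in>S. 0 \<le> w a" "sum w S = 1" "(\<Sum>a\<in>S. w a *\<^sub>R a) = u"
    using S(4) unfolding convex_hull_finite[OF S(2)] by blast
  have "w a > 0" if a: "a \<in> S" for a
  proof (rule ccontr)
    assume "\<not> w a > 0"
    then have wa: "w a = 0" using w(1) a by force
    have "u \<in> convex hull (S - {a})" unfolding convex_hull_finite[OF finite_Diff[OF S(2)]]
    proof (intro CollectI exI[of _ w] conjI)
      show "\<forall>x\<in>S - {a}. 0 \<le> w x" using w by auto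
      show "sum w (S - {a}) = 1" using w(2) wa a S(2) by (simp add: sum_diff1)
      show "(\<Sum>x\<in>S - {a}. w x *\<^sub>R x) = u" using w(3) wa a S(2) by (simp add: sum_diff1)
    qed
    moreover have "card (S - {a}) \<le> k - 1" using cS a S(2) by simp
    ultimately show False using small[of "S - {a}"] nin by blast
  qed
  then show thesis using that y S(1,2) cS w(2,3) unfolding A_def by blast
qed

lemma stratum_barycentre:
  assumes "(y, u) \<in> stratum"
  obtains x t where "y \<in> Y" "x \<in> chamber k" "\<forall>r<k. (y, x r) \<in> Z"
    "\<forall>r<k. t r > 0" "(\<Sum>r<k. t r) = 1" "u = (\<Sum>r<k. t r *\<^sub>R i (y, x r))"
proof -
  obtain S w where y: "y \<in> Y" and S: "S \<subseteq> i ` {z \<in> Z. fst z = y}" "finite S" "card S = k"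
    and w: "\<forall>a\<in>S. w a > 0" "sum w S = 1" "(\<Sum>a\<in>S. w a *\<^sub>R a) = u"
    using stratum_simplex[OF assms] by blast
  define R where "R = {s. (y, s) \<in> Z \<and> i (y, s) \<in> S}"
  have imR: "(\<lambda>s. i (y, s)) ` R = S" using S(1) unfolding R_def by force
  have injR: "inj_on (\<lambda>s. i (y, s)) R" using inj_on_i unfolding R_def inj_on_def by blast
  have "finite R" using imR injR S(2) finite_imageD by blast
  moreover have "card R = k" using imR injR S(3) card_image by fastforce
  ultimately have "R \<in> Conf k" by (simp add: Conf_def)
  note x = sorted_coords_in_chamber[OF this]
  define x where "x = sorted_coords k R"
  define p where "p = (\<lambda>r. i (y, x r))"
  have xZ: "\<forall>r<k. (y, x r) \<in> Z" using x(2) unfolding R_def x_def by auto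
  have pinj: "inj_on p {..<k}" using fibre_points(1)[OF x(1)[folded x_def] xZ] unfolding p_def .
  have "p ` {..<k} = (\<lambda>s. i (y, s)) ` (x ` {..<k})" unfolding p_def by auto
  then have pS: "p ` {..<k} = S" using imR x(2) unfolding x_def by simp
  show thesis
  proof
    show "y \<in> Y" "x \<in> chamber k" "\<forall>r<k. (y, x r) \<in> Z" using y x(1) xZ by (simp_all add: x_def)
    show "\<forall>r<k. (w \<circ> p) r > 0" using w(1) pS by auto
    have "(\<Sum>r<k. w (p r)) = sum w (p ` {..<k})" using pinj by (simp add: sum.reindex)
    then show "(\<Sum>r<k. (w \<circ> p) r) = 1" using w(2) pS by simp
    have "(\<Sum>r<k. w (p r) *\<^sub>R p r) = (\<Sum>a\<in>p ` {..<k}. w a *\<^sub>R a)" using pinj by (simp add: sum.reindex)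
    then show "u = (\<Sum>r<k. (w \<circ> p) r *\<^sub>R i (y, x r))" using w(3) pS by (simp add: p_def)
  qed
qed

lemma cofactors_exist:
  assumes y: "y \<in> Y" and x: "x \<in> chamber k" and xZ: "\<forall>r<k. (y, x r) \<in> Z"
  obtains h where "\<And>j. j < m \<Longrightarrow> poly_of d (y j) = root_factor x * h j"
    "\<And>j. j < m \<Longrightarrow> degree (h j) = e \<and> coeff (h j) e = 1 \<and> coeffs_in K (h j)"
proof -
  have PT: "y \<in> PolyTuples K d m" using y by (simp add: Sigma_disc_def)
  have "root_factor x dvd poly_of d (y j)" if j: "j < m" for j
  proof -
    have "(\<Prod>r\<in>{..<k}. [:- (complex_of_real \<circ> x) r, 1:] ^ n) dvd poly_of d (y j)"
    proof (rule prod_linear_powers_dvd)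
      show "inj_on (complex_of_real \<circ> x) {..<k}" using inj_on_chamber[OF x] by (simp add: inj_on_def)
      show "\<forall>r\<in>{..<k}. [:- (complex_of_real \<circ> x) r, 1:] ^ n dvd poly_of d (y j)"
        using xZ j unfolding Z_taut_def by (auto simp: boldf_zero_iff_dvd[symmetric])
    qed simp
    then show ?thesis unfolding root_factor_def by simp
  qed
  then have "\<forall>j. \<exists>h. j < m \<longrightarrow> poly_of d (y j) = root_factor x * h" by (meson dvdE)
  then obtain h where h: "\<And>j. j < m \<Longrightarrow> poly_of d (y j) = root_factor x * h j" by metis
  have "degree (h j) = e \<and> coeff (h j) e = 1 \<and> coeffs_in K (h j)" if j: "j < m" for j
  proof -
    have "degree (poly_of d (y j)) = n * k + e" "coeff (poly_of d (y j)) (n * k + e) = 1"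
      using d_eq by (simp_all add: degree_poly_of coeff_poly_of)
    note monic = monic_cofactor[OF h[OF j] this root_factor_monic]
    have "coeffs_in K (h j)"
    proof (cases "K = \<real>")
      case True
      have "coeff (poly_of d (y j)) a \<in> \<real>" for a
        using PT True j unfolding PolyTuples_def by (auto simp: coeff_poly_of)
      moreover have "coeff (root_factor x) a \<in> \<real>" for a
        using coeffs_in_root_factor True by (simp add: coeffs_in_def)
      ultimately show ?thesis unfolding coeffs_in_def True
        using monic_cofactor_real[OF h[OF j] root_factor_monic _ _ monic] by blast
    next
      case False then show ?thesis using K by (simp add: coeffs_in_def)
    qed
    then show ?thesis using monic by simp
  qed
  with h show thesis by (rule that)
qed

lemma param_surj:
  assumes "(y, u) \<in> stratum"
  shows "(y, u) \<in> param ` param_dom"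
proof -
  obtain x t where y: "y \<in> Y" and x: "x \<in> chamber k" and xZ: "\<forall>r<k. (y, x r) \<in> Z"
    and t: "\<forall>r<k. t r > 0" "(\<Sum>r<k. t r) = 1" and u: "u = (\<Sum>r<k. t r *\<^sub>R i (y, x r))"
    using stratum_barycentre[OF assms] by blast
  obtain h where h: "\<And>j. j < m \<Longrightarrow> poly_of d (y j) = root_factor x * h j"
    and hm: "\<And>j. j < m \<Longrightarrow> degree (h j) = e \<and> coeff (h j) e = 1 \<and> coeffs_in K (h j)"
    using cofactors_exist[OF y x xZ] by blast
  define v where "v = coords h t"
  have v: "v \<in> Rl fdim" "\<And>j. j < m \<Longrightarrow> cofactor v j = h j" "\<And>r. r < k \<Longrightarrow> weight v r = t r"
    unfolding v_def using coords_in_Rl cofactor_coords hm weight_coords[OF t] by simp_all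
  have "tuple x v = y"
  proof (intro ext)
    fix j a
    show "tuple x v j a = y j a"
    proof (cases "j < m \<and> a < d")
      case True
      then have "coeff (root_factor x * cofactor v j) a = coeff (poly_of d (y j)) a"
        using v(2) h by simp
      then show ?thesis using True by (simp add: tuple_def coeff_poly_of)
    next
      case False
      then show ?thesis using y by (auto simp: tuple_def Sigma_disc_def PolyTuples_def)
    qed
  qed
  then have "param (x, v) = (y, u)" using u v(3) by (simp add: param_eq)
  then show ?thesis using x v(1) unfolding param_dom_def by force
qed

lemma fibre_points_subset:
  assumes "(\<lambda>r. i (y, x1 r)) ` {..<k} \<subseteq> (\<lambda>r. i (y, x2 r)) ` {..<k}"
     "\<forall>r<k. (y, x1 r) \<in> Z" "\<forall>r<k. (y, x2 r) \<in> Z"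
  shows "x1 ` {..<k} \<subseteq> x2 ` {..<k}"
proof
  fix a assume "a \<in> x1 ` {..<k}"
  then obtain r where r: "r < k" "a = x1 r" by auto
  then obtain r' where r': "r' < k" "i (y, x1 r) = i (y, x2 r')" using assms(1) by auto
  then have "(y, x1 r) = (y, x2 r')" using inj_on_i assms(2,3) r unfolding inj_on_def by blast
  then show "a \<in> x2 ` {..<k}" using r r' by auto
qed

text \<open>Only non-negativity of \<open>t'\<close> is assumed, so that the lemma applies to limits of weights.\<close>

lemma barycentre_unique:
  assumes y: "y \<in> Y" and x: "x \<in> chamber k" "x' \<in> chamber k"
    and xZ: "\<forall>r<k. (y, x r) \<in> Z" "\<forall>r<k. (y, x' r) \<in> Z"
    and t: "\<forall>r<k. t r > 0" "(\<Sum>r<k. t r) = 1" and t': "\<forall>r<k. t' r \<ge> 0" "(\<Sum>r<k. t' r) = 1"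
    and eq: "(\<Sum>r<k. t r *\<^sub>R i (y, x r)) = (\<Sum>r<k. t' r *\<^sub>R i (y, x' r))"
  shows "x = x'" "\<forall>r<k. t r = t' r"
proof -
  define A where "A = i ` {z \<in> Z. fst z = y}"
  have indep: "\<not> affine_dependent A" unfolding A_def by (rule affine_independent_fibre[OF y])
  note P = fibre_points[OF x(1) xZ(1), folded A_def]
  note P' = fibre_points[OF x(2) xZ(2), folded A_def]
  have "(\<Sum>r<k. t' r *\<^sub>R i (y, x' r)) \<in> convex hull ((\<lambda>r. i (y, x' r)) ` {..<k})"
    by (rule convex_sum) (use t' in \<open>auto intro: hull_inc\<close>)
  then have "(\<lambda>r. i (y, x r)) ` {..<k} \<subseteq> (\<lambda>r. i (y, x' r)) ` {..<k}"
    using affine_independent_convex_hull_support_indexed[OF indep P(2,1) t] P' eq by simp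
  moreover have "card ((\<lambda>r. i (y, x r)) ` {..<k}) = card ((\<lambda>r. i (y, x' r)) ` {..<k})"
    using P(1) P'(1) by (simp add: card_image)
  ultimately have "(\<lambda>r. i (y, x r)) ` {..<k} = (\<lambda>r. i (y, x' r)) ` {..<k}"
    by (intro card_subset_eq) auto
  then have "x ` {..<k} = x' ` {..<k}"
    using fibre_points_subset[OF _ xZ(1,2)] fibre_points_subset[OF _ xZ(2,1)] by blast
  then show xx: "x = x'" using chamber_eqI x by blast
  show "\<forall>r<k. t r = t' r"
    using affine_independent_coeffs_unique_indexed[OF indep P(2,1), of t t'] eq xx t(2) t'(2) by simp
qed

lemma param_inj: "inj_on param param_dom"
proof (rule inj_onI)
  fix p p' assume "p \<in> param_dom" "p' \<in> param_dom" and eq: "param p = param p'"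
  then obtain x v x' v' where p: "p = (x, v)" "p' = (x', v')" and xv: "x \<in> chamber k" "x' \<in> chamber k"
    "v \<in> Rl fdim" "v' \<in> Rl fdim" unfolding param_dom_def by auto
  define y where "y = tuple x v"
  have yy: "tuple x' v' = y" using eq by (simp add: p param_eq y_def)
  have y: "y \<in> Y" unfolding y_def by (rule tuple_in_Y)
  have xZ: "\<forall>r<k. (y, x r) \<in> Z" "\<forall>r<k. (y, x' r) \<in> Z"
    using tuple_in_Z yy unfolding y_def by metis+
  have wpos: "\<forall>r<k. weight v r > 0" "\<forall>r<k. weight v' r \<ge> 0"
    using weight_pos less_imp_le by blast+
  have "(\<Sum>r<k. weight v r *\<^sub>R i (y, x r)) = (\<Sum>r<k. weight v' r *\<^sub>R i (y, x' r))"
    using eq by (simp add: p param_eq y_def yy)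
  note unique = barycentre_unique[OF y xv(1,2) xZ wpos(1) weight_sum wpos(2) weight_sum this]
  have xx: "x = x'" and tt: "\<forall>r<k. weight v r = weight v' r" by (fact unique)+
  have "cofactor v j = cofactor v' j" if j: "j < m" for j
    using poly_of_tuple[OF j, of x v] poly_of_tuple[OF j, of x' v'] yy xx root_factor_nonzero
    unfolding y_def by simp
  then have "v = v'"
    using coords_cong[of "cofactor v" "cofactor v'" "weight v" "weight v'"] tt
      coords_cofactor_weight[OF xv(3)] coords_cofactor_weight[OF xv(4)] by simp
  then show "p = p'" using p xx by simp
qed

lemma param_bij: "bij_betw param param_dom stratum"
  unfolding bij_betw_def using param_inj param_surj param_in_stratum
  by (auto simp: param_dom_def)

lemma coeffs_tendsto_root_factor:
  "(\<And>r. (\<lambda>l. X l r) \<longlonglongrightarrow> x r) \<Longrightarrow> coeffs_tendsto (\<lambda>l. root_factor (X l)) (root_factor x)"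
  unfolding root_factor_def
  by (intro coeffs_tendsto_prod coeffs_tendsto_power coeffs_tendsto_linear tendsto_of_real) auto

lemma coeffs_tendsto_cofactor:
  "(\<And>r. (\<lambda>l. V l r) \<longlonglongrightarrow> v r) \<Longrightarrow> coeffs_tendsto (\<lambda>l. cofactor (V l) j) (cofactor v j)"
  unfolding cofactor_def cofactor_coeff_def by (intro coeffs_tendsto_poly_of tendsto_Complex) auto

lemma tendsto_weight:
  assumes "\<And>r. (\<lambda>l. V l r) \<longlonglongrightarrow> v r"
  shows "(\<lambda>l. weight (V l) r) \<longlonglongrightarrow> weight v r"
proof -
  have "(\<lambda>l. exp_weight (V l) s) \<longlonglongrightarrow> exp_weight v s" for s
    unfolding exp_weight_def by (auto intro!: tendsto_exp assms)
  then show ?thesis unfolding weight_def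
    using exp_weight_sum_pos[of v] by (auto intro!: tendsto_divide tendsto_sum)
qed

lemma tendsto_tuple:
  assumes "\<And>r. (\<lambda>l. X l r) \<longlonglongrightarrow> x r" "\<And>r. (\<lambda>l. V l r) \<longlonglongrightarrow> v r"
  shows "(\<lambda>l. tuple (X l) (V l)) \<longlonglongrightarrow> tuple x v"
  unfolding tendsto_fun_iff_componentwise
proof (intro allI)
  fix j a
  have "coeffs_tendsto (\<lambda>l. root_factor (X l) * cofactor (V l) j) (root_factor x * cofactor v j)"
    by (intro coeffs_tendsto_mult coeffs_tendsto_root_factor coeffs_tendsto_cofactor assms)
  then show "(\<lambda>l. tuple (X l) (V l) j a) \<longlonglongrightarrow> tuple x v j a"
    unfolding tuple_def coeffs_tendsto_def by auto
qed

lemma tendsto_i: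
  assumes "\<forall>l. P l \<in> Z" "P0 \<in> Z" "P \<longlonglongrightarrow> P0"
  shows "(\<lambda>l. i (P l)) \<longlonglongrightarrow> i P0"
  using continuous_on_i assms unfolding continuous_on_sequentially comp_def by blast

lemma continuous_on_param: "continuous_on param_dom param"
proof (rule continuous_on_sequentiallyI)
  fix s :: "nat \<Rightarrow> (nat \<Rightarrow> real) \<times> (nat \<Rightarrow> real)" and a
  assume "\<forall>l. s l \<in> param_dom" "a \<in> param_dom" and lim: "s \<longlonglongrightarrow> a"
  define X where "X l = fst (s l)" for l
  define V where "V l = snd (s l)" for l
  have s: "s = (\<lambda>l. (X l, V l))" by (simp add: X_def V_def)
  obtain x v where a: "a = (x, v)" by fastforce
  have X: "(\<lambda>l. X l r) \<longlonglongrightarrow> x r" and V: "(\<lambda>l. V l r) \<longlonglongrightarrow> v r" for r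
    using tendsto_fst[OF lim] tendsto_snd[OF lim] unfolding s a tendsto_fun_iff_componentwise by simp_all
  have Y: "(\<lambda>l. tuple (X l) (V l)) \<longlonglongrightarrow> tuple x v" by (rule tendsto_tuple[OF X V])
  have "(\<lambda>l. i (tuple (X l) (V l), X l r)) \<longlonglongrightarrow> i (tuple x v, x r)" if "r < k" for r
    by (rule tendsto_i) (use tuple_in_Z[OF that] tendsto_Pair[OF Y X] in auto)
  then have "(\<lambda>l. \<Sum>r<k. weight (V l) r *\<^sub>R i (tuple (X l) (V l), X l r))
      \<longlonglongrightarrow> (\<Sum>r<k. weight v r *\<^sub>R i (tuple x v, x r))"
    by (intro tendsto_sum tendsto_scaleR tendsto_weight V) auto
  then show "(\<lambda>l. param (s l)) \<longlonglongrightarrow> param a"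
    unfolding s a param_eq using Y by (simp add: tendsto_Pair)
qed

lemma limit_in_Z:
  assumes y: "y \<in> Y" and YL: "\<And>j a. (\<lambda>l. YY l j a) \<longlonglongrightarrow> y j a"
    and XL: "XX \<longlonglongrightarrow> x0" and inZ: "\<forall>l. (YY l, XX l) \<in> Z"
  shows "(y, x0) \<in> Z"
proof -
  have "boldf_zero n (poly_of d (y j)) x0" if j: "j < m" for j
    unfolding boldf_zero_iff_dvd pderiv_funpow_vanish_iff_dvd[symmetric]
  proof (intro allI impI)
    fix a assume "a < n"
    have "(\<lambda>l. poly ((pderiv ^^ a) (poly_of d (YY l j))) (complex_of_real (XX l)))
          \<longlonglongrightarrow> poly ((pderiv ^^ a) (poly_of d (y j))) (complex_of_real x0)"
    proof (rule tendsto_poly_if_coeffs_tendsto)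
      show "coeffs_tendsto (\<lambda>l. (pderiv ^^ a) (poly_of d (YY l j))) ((pderiv ^^ a) (poly_of d (y j)))"
        by (intro coeffs_tendsto_pderiv_funpow coeffs_tendsto_poly_of YL)
      show "degree ((pderiv ^^ a) (poly_of d (YY l j))) \<le> d" for l
        by (rule order_trans[OF degree_pderiv_funpow_le]) (simp add: degree_poly_of)
      show "degree ((pderiv ^^ a) (poly_of d (y j))) \<le> d"
        by (rule order_trans[OF degree_pderiv_funpow_le]) (simp add: degree_poly_of)
      show "(\<lambda>l. complex_of_real (XX l)) \<longlonglongrightarrow> complex_of_real x0" by (intro tendsto_of_real XL)
    qed
    moreover have "poly ((pderiv ^^ a) (poly_of d (YY l j))) (complex_of_real (XX l)) = 0" for l
      using inZ j \<open>a < n\<close>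
      unfolding Z_taut_def boldf_zero_iff_dvd pderiv_funpow_vanish_iff_dvd[symmetric] by auto
    then have "(\<lambda>l. poly ((pderiv ^^ a) (poly_of d (YY l j))) (complex_of_real (XX l))) \<longlonglongrightarrow> 0"
      by simp
    ultimately show "poly ((pderiv ^^ a) (poly_of d (y j))) (complex_of_real x0) = 0"
      using LIMSEQ_unique by blast
  qed
  then show ?thesis using y unfolding Z_taut_def by blast
qed

lemma tuple_roots_bounded:
  assumes "convergent (\<lambda>l. tuple (X l) (V l))"
  obtains B where "\<And>l r. r < k \<Longrightarrow> \<bar>X l r\<bar> \<le> B"
proof -
  have "convergent (\<lambda>l. tuple (X l) (V l) 0 a)" for a
    using assms unfolding convergent_def tendsto_fun_iff_componentwise by blast
  then have "Bseq (\<lambda>l. tuple (X l) (V l) 0 a)" for a by (rule convergent_imp_Bseq)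
  then have "\<forall>a. \<exists>b. \<forall>l. norm (tuple (X l) (V l) 0 a) \<le> b" unfolding Bseq_def by blast
  then obtain b where b: "\<And>a l. norm (tuple (X l) (V l) 0 a) \<le> b a" by metis
  have "\<bar>X l r\<bar> \<le> 1 + (\<Sum>a<d. b a)" if r: "r < k" for l r
  proof -
    have "poly (poly_of d (tuple (X l) (V l) 0)) (complex_of_real (X l r)) = 0"
      using poly_of_tuple m1 poly_root_factor_root[OF r] by simp
    then have "norm (complex_of_real (X l r)) \<le> 1 + (\<Sum>a<d. norm (tuple (X l) (V l) 0 a))"
      by (rule poly_of_root_bound)
    also have "\<dots> \<le> 1 + (\<Sum>a<d. b a)" using b by (simp add: sum_mono)
    finally show ?thesis by simp
  qed
  then show thesis by (rule that)
qed

text \<open>A barycentre whose vertices are not all distinct lies in the convex hull of at most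
  \<open>k - 1\<close> points of the fibre.\<close>

lemma barycentre_vertices_inj:
  assumes y: "y \<in> Y" and xZ: "\<forall>r<k. (y, x r) \<in> Z"
    and t: "\<forall>r<k. t r \<ge> 0" "(\<Sum>r<k. t r) = 1"
    and nin: "(y, \<Sum>r<k. t r *\<^sub>R i (y, x r)) \<notin> filt (k - 1)"
  shows "inj_on x {..<k}"
proof (rule ccontr)
  assume "\<not> inj_on x {..<k}"
  then have lt: "card (x ` {..<k}) < k"
    using inj_on_iff_eq_card[of "{..<k}" x] card_image_le[of "{..<k}" x] by simp
  define P where "P = (\<lambda>r. i (y, x r)) ` {..<k}"
  have "P = (\<lambda>s. i (y, s)) ` (x ` {..<k})" unfolding P_def by auto
  then have "card P \<le> card (x ` {..<k})" by (simp add: card_image_le)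
  then have "card P \<le> k - 1" using lt by simp
  moreover have "(\<Sum>r<k. t r *\<^sub>R i (y, x r)) \<in> convex hull P" unfolding P_def
    by (rule convex_sum) (use t in \<open>auto intro: hull_inc\<close>)
  moreover have "P \<subseteq> i ` {z \<in> Z. fst z = y}" unfolding P_def using xZ by auto
  ultimately have "(y, \<Sum>r<k. t r *\<^sub>R i (y, x r)) \<in> filt (k - 1)" unfolding mem_filt_iff using y
    by (intro conjI exI[of _ P]) (auto simp: P_def)
  then show False using nin by simp
qed

lemma limit_in_chamber:
  assumes "\<forall>l. X l \<in> chamber k" "\<And>r. (\<lambda>l. X l r) \<longlonglongrightarrow> x r" "inj_on x {..<k}"
  shows "x \<in> chamber k"
  unfolding chamber_def
proof (intro CollectI conjI allI impI)
  fix a b assume ab: "a < b" "b < k"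
  have "X l a < X l b" for l using assms(1) ab unfolding chamber_def by blast
  then have "x a \<le> x b" by (intro LIMSEQ_le[OF assms(2) assms(2)]) (auto intro: less_imp_le)
  moreover have "x a \<noteq> x b" using assms(3) ab unfolding inj_on_def by force
  ultimately show "x a < x b" by simp
next
  fix r assume "k \<le> r"
  then have "(\<lambda>l. X l r) \<longlonglongrightarrow> 0" using assms(1) by (simp add: chamber_def)
  then show "x r = 0" using assms(2) LIMSEQ_unique by blast
qed

lemma limit_of_weights:
  assumes "\<And>r. (\<lambda>l. weight (V l) r) \<longlonglongrightarrow> t r"
  shows "\<forall>r<k. t r \<ge> 0" "(\<Sum>r<k. t r) = 1" "\<And>r. k \<le> r \<Longrightarrow> t r = 0"
proof -
  have "t r \<ge> 0" if "r < k" for r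
    using assms[of r] by (rule LIMSEQ_le_const) (auto intro: less_imp_le weight_pos[OF that])
  then show "\<forall>r<k. t r \<ge> 0" by blast
  have "(\<lambda>l. \<Sum>r<k. weight (V l) r) \<longlonglongrightarrow> (\<Sum>r<k. t r)" by (intro tendsto_sum assms)
  moreover have "(\<lambda>l. \<Sum>r<k. weight (V l) r) \<longlonglongrightarrow> 1" by (simp add: weight_sum)
  ultimately show "(\<Sum>r<k. t r) = 1" using LIMSEQ_unique by blast
  show "t r = 0" if "k \<le> r" for r
  proof -
    have "(\<lambda>l. weight (V l) r) \<longlonglongrightarrow> 0" using that by (simp add: weight_def)
    then show ?thesis using assms[of r] LIMSEQ_unique by blast
  qed
qed

lemma param_limit_unique:
  assumes X: "\<forall>l. X l \<in> chamber k" and x: "x \<in> chamber k"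
    and lim: "(\<lambda>l. param (X l, V l)) \<longlonglongrightarrow> param (x, v)"
    and xs: "\<And>r. (\<lambda>l. X l r) \<longlonglongrightarrow> xs r" and ts: "\<And>r. (\<lambda>l. weight (V l) r) \<longlonglongrightarrow> ts r"
  shows "xs = x" "ts = weight v"
proof -
  define y where "y = tuple x v"
  define u where "u = (\<Sum>r<k. weight v r *\<^sub>R i (y, x r))"
  have YL: "(\<lambda>l. tuple (X l) (V l)) \<longlonglongrightarrow> y" and UL:
    "(\<lambda>l. \<Sum>r<k. weight (V l) r *\<^sub>R i (tuple (X l) (V l), X l r)) \<longlonglongrightarrow> u"
    using tendsto_fst[OF lim] tendsto_snd[OF lim] by (simp_all add: param_eq y_def u_def)
  have y: "y \<in> Y" unfolding y_def by (rule tuple_in_Y)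
  have xZ: "\<forall>r<k. (y, x r) \<in> Z" using tuple_in_Z unfolding y_def by blast
  have "(y, u) \<in> stratum" using param_in_stratum[OF x, of v] by (simp add: param_eq y_def u_def)
  then have nin: "(y, u) \<notin> filt (k - 1)" by (simp add: stratum_def)
  note ts_props = limit_of_weights[OF ts]
  have YLj: "(\<lambda>l. tuple (X l) (V l) j a) \<longlonglongrightarrow> y j a" for j a
    using YL unfolding tendsto_fun_iff_componentwise by blast
  have xsZ: "\<forall>r<k. (y, xs r) \<in> Z"
  proof (intro allI impI)
    fix r assume "r < k"
    show "(y, xs r) \<in> Z" by (rule limit_in_Z[OF y YLj xs]) (use tuple_in_Z[OF \<open>r < k\<close>] in auto)
  qed
  have "(\<lambda>l. i (tuple (X l) (V l), X l r)) \<longlonglongrightarrow> i (y, xs r)" if "r < k" for r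
    by (rule tendsto_i) (use tuple_in_Z[OF that] xsZ that tendsto_Pair[OF YL xs] in auto)
  then have "(\<lambda>l. \<Sum>r<k. weight (V l) r *\<^sub>R i (tuple (X l) (V l), X l r))
      \<longlonglongrightarrow> (\<Sum>r<k. ts r *\<^sub>R i (y, xs r))"
    by (intro tendsto_sum tendsto_scaleR ts) auto
  then have us: "u = (\<Sum>r<k. ts r *\<^sub>R i (y, xs r))" using UL LIMSEQ_unique by blast
  then have "inj_on xs {..<k}"
    using barycentre_vertices_inj[OF y xsZ ts_props(1,2)] nin by simp
  then have "xs \<in> chamber k" using limit_in_chamber[OF X xs] by blast
  note unique = barycentre_unique[OF y x this xZ xsZ _ weight_sum ts_props(1,2)]
  have "x = xs" "\<forall>r<k. weight v r = ts r"
    using unique weight_pos us unfolding u_def by blast+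
  then show "xs = x" "ts = weight v"
    using ts_props(3) by (auto simp: weight_def fun_eq_iff)
qed

lemma tendsto_coords:
  assumes V: "\<forall>l. V l \<in> Rl fdim" "v \<in> Rl fdim"
    and X: "\<And>r. (\<lambda>l. X l r) \<longlonglongrightarrow> x r" and W: "\<And>r. (\<lambda>l. weight (V l) r) \<longlonglongrightarrow> weight v r"
    and Y: "(\<lambda>l. tuple (X l) (V l)) \<longlonglongrightarrow> tuple x v"
  shows "(\<lambda>l. V l idx) \<longlonglongrightarrow> v idx"
proof -
  have H: "coeffs_tendsto (\<lambda>l. cofactor (V l) j) (cofactor v j)" if j: "j < m" for j
  proof (rule coeffs_tendsto_monic_cofactor[OF coeffs_tendsto_root_factor[OF X] root_factor_monic])
    show "coeff (cofactor (V l) j) a = coeff (cofactor v j) a" if "e \<le> a" for l a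
      using that by (simp add: cofactor_def coeff_poly_of)
    have "(\<lambda>l. tuple (X l) (V l) j a) \<longlonglongrightarrow> tuple x v j a" for a
      using Y unfolding tendsto_fun_iff_componentwise by blast
    then have "coeffs_tendsto (\<lambda>l. poly_of d (tuple (X l) (V l) j)) (poly_of d (tuple x v j))"
      by (intro coeffs_tendsto_poly_of)
    then show "coeffs_tendsto (\<lambda>l. root_factor (X l) * cofactor (V l) j) (root_factor x * cofactor v j)"
      using poly_of_tuple[OF j] by simp
  qed
  have "(\<lambda>l. coords (cofactor (V l)) (weight (V l)) idx) \<longlonglongrightarrow> coords (cofactor v) (weight v) idx"
  proof (cases "idx < ncoeffs")
    case True
    then show ?thesis
      using H[OF ncoeffs_index(1)[OF True]] unfolding coords_def coeffs_tendsto_def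
      by (auto intro: tendsto_Re tendsto_Im)
  next
    case False
    show ?thesis
    proof (cases "idx < fdim")
      case True
      then have "idx - ncoeffs < k" "k - 1 < k" using False k1 by (auto simp: fdim_def)
      then have "weight v (idx - ncoeffs) > 0" "weight v (k - 1) > 0" by (simp_all add: weight_pos)
      then have "(\<lambda>l. ln (weight (V l) (idx - ncoeffs) / weight (V l) (k - 1)))
          \<longlonglongrightarrow> ln (weight v (idx - ncoeffs) / weight v (k - 1))"
        by (intro tendsto_ln tendsto_divide W) auto
      then show ?thesis using False True by (simp add: coords_def)
    qed (use False in \<open>simp add: coords_def\<close>)
  qed
  then show ?thesis using V by (simp add: coords_cofactor_weight)
qed

text \<open>The roots stay bounded and the weights lie in the standard simplex, so it suffices to
  identify every subsequential limit.\<close>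

lemma param_inverse_tendsto:
  assumes XV: "\<forall>l. (X l, V l) \<in> param_dom" and xv: "(x, v) \<in> param_dom"
    and lim: "(\<lambda>l. param (X l, V l)) \<longlonglongrightarrow> param (x, v)"
  shows "(\<lambda>l. (X l, V l)) \<longlonglongrightarrow> (x, v)"
proof -
  have X: "\<forall>l. X l \<in> chamber k" and x: "x \<in> chamber k" and V: "\<forall>l. V l \<in> Rl fdim" "v \<in> Rl fdim"
    using XV xv by (auto simp: param_dom_def)
  have Y: "(\<lambda>l. tuple (X l) (V l)) \<longlonglongrightarrow> tuple x v"
    using tendsto_fst[OF lim] by (simp add: param_eq)
  then obtain B where B: "\<And>l r. r < k \<Longrightarrow> \<bar>X l r\<bar> \<le> B"
    using tuple_roots_bounded convergent_def by blast
  define C where "C = {z::nat\<Rightarrow>real. \<forall>r. z r \<in> (if r < k then {-B..B} else {0})}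
      \<times> {z::nat\<Rightarrow>real. \<forall>r. z r \<in> (if r < k then {0..1} else {0})}"
  have "compact C" unfolding C_def by (intro compact_Times compact_fun_box) auto
  moreover have "\<forall>l. (X l, weight (V l)) \<in> C"
  proof
    fix l
    have "X l r \<in> (if r < k then {-B..B} else {0})" for r
      using X B[of r l] by (auto simp: chamber_def abs_le_iff)
    moreover have "weight (V l) r \<in> (if r < k then {0..1} else {0})" for r
      using weight_pos[of r "V l"] weight_le_1[of "V l" r] by (cases "r < k") (simp_all add: weight_def)
    ultimately show "(X l, weight (V l)) \<in> C" by (simp add: C_def)
  qed
  ultimately have XW: "(\<lambda>l. (X l, weight (V l))) \<longlonglongrightarrow> (x, weight v)"
  proof (rule tendsto_if_subseq_limits_eq)
    fix s :: "nat \<Rightarrow> nat" and l0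
    assume s: "strict_mono s" and L: "((\<lambda>l. (X l, weight (V l))) \<circ> s) \<longlonglongrightarrow> l0"
    obtain xs ts where l0: "l0 = (xs, ts)" by fastforce
    have "(\<lambda>l. (X \<circ> s) l r) \<longlonglongrightarrow> xs r" "(\<lambda>l. weight ((V \<circ> s) l) r) \<longlonglongrightarrow> ts r" for r
      using tendsto_fst[OF L] tendsto_snd[OF L] unfolding l0 comp_def tendsto_fun_iff_componentwise by simp_all
    moreover have "(\<lambda>l. param ((X \<circ> s) l, (V \<circ> s) l)) \<longlonglongrightarrow> param (x, v)"
      using LIMSEQ_subseq_LIMSEQ[OF lim s] by (simp add: comp_def)
    moreover have "\<forall>l. (X \<circ> s) l \<in> chamber k" using X by simp
    ultimately have "xs = x" "ts = weight v" using param_limit_unique x by blast+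
    then show "l0 = (x, weight v)" by (simp add: l0)
  qed
  have "(\<lambda>l. X l r) \<longlonglongrightarrow> x r" "(\<lambda>l. weight (V l) r) \<longlonglongrightarrow> weight v r" for r
    using tendsto_fst[OF XW] tendsto_snd[OF XW] unfolding tendsto_fun_iff_componentwise by simp_all
  then have "(\<lambda>l. X l) \<longlonglongrightarrow> x" "(\<lambda>l. V l) \<longlonglongrightarrow> v"
    using tendsto_coords[OF V _ _ Y] unfolding tendsto_fun_iff_componentwise by blast+
  then show ?thesis by (rule tendsto_Pair)
qed

lemma stratum_homeomorphic_param_dom:
  "subtopology euclidean stratum homeomorphic_space subtopology euclidean param_dom"
proof -
  define inv where "inv = inv_into param_dom param"
  have inv: "inv q \<in> param_dom" "param (inv q) = q" if "q \<in> stratum" for q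
    using param_bij that unfolding inv_def by (auto simp: bij_betw_def inv_into_into f_inv_into_f)
  have "inv (param p) = p" if "p \<in> param_dom" for p
    using param_bij that unfolding inv_def by (simp add: bij_betw_inv_into_left)
  moreover have "continuous_on stratum inv"
  proof (rule continuous_on_sequentiallyI)
    fix s q assume s: "\<forall>l. s l \<in> stratum" and q: "q \<in> stratum" and lim: "s \<longlonglongrightarrow> q"
    have "(\<lambda>l. param (inv (s l))) \<longlonglongrightarrow> param (inv q)" using lim inv(2) s q by simp
    then have "(\<lambda>l. (fst (inv (s l)), snd (inv (s l)))) \<longlonglongrightarrow> (fst (inv q), snd (inv q))"
      using inv(1) s q by (intro param_inverse_tendsto) auto
    then show "(\<lambda>l. inv (s l)) \<longlonglongrightarrow> inv q" by simp
  qed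
  moreover have "param \<in> param_dom \<rightarrow> stratum" using param_bij by (auto simp: bij_betw_def)
  ultimately have "homeomorphic_maps (subtopology euclidean stratum) (subtopology euclidean param_dom) inv param"
    unfolding homeomorphic_maps_def continuous_map_subtopology_eu topspace_subtopology topspace_euclidean
    using continuous_on_param inv by auto
  then show ?thesis unfolding homeomorphic_space_def by blast
qed

lemma stratum_real_affine_bundle:
  "\<exists>(E :: ((nat \<Rightarrow> nat \<Rightarrow> complex) \<times> (real ^ 'N)) topology) p.
     real_affine_bundle E (Conf_top k) p fdim \<and> subtopology euclidean stratum homeomorphic_space E"
proof (rule real_affine_bundle_if_homeomorphic_product)
  have "subtopology euclidean param_dom
      = prod_topology (subtopology euclidean (chamber k)) (subtopology euclidean (Rl fdim))"
    by (simp add: param_dom_def)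
  also have "\<dots> homeomorphic_space prod_topology (Conf_top k) (subtopology euclidean (Rl fdim))"
    using Conf_top_homeomorphic_chamber homeomorphic_space_sym
    by (blast intro: homeomorphic_space_prod_topology homeomorphic_space_refl)
  finally show "subtopology euclidean stratum homeomorphic_space
      prod_topology (Conf_top k) (subtopology euclidean (Rl fdim))"
    using stratum_homeomorphic_param_dom homeomorphic_space_trans by blast
qed

end

theorem lemma3p2:
  fixes K :: "complex set" and d m n k :: nat
    and i :: "(nat \<Rightarrow> nat \<Rightarrow> complex) \<times> real \<Rightarrow> real ^ 'N"
  assumes "K = \<real> \<or> K = UNIV"
    and "d \<ge> 1" "m \<ge> 1" "n \<ge> 1" "(m, n) \<noteq> (1, 1)"
    and "nondegenerate_resolution (subtopology euclidean (Z_taut K d m n))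
           (Sigma_disc K d m n) fst i"
    and "1 \<le> k" "k \<le> d div n"
  shows "\<exists>(E :: ((nat \<Rightarrow> nat \<Rightarrow> complex) \<times> (real ^ 'N)) topology) p.
           real_affine_bundle E (Conf_top k) p (dimK K * m * (d - n * k) + k - 1) \<and>
           subtopology euclidean
             (resolution_filt (subtopology euclidean (Z_taut K d m n)) (Sigma_disc K d m n) fst i k
              - resolution_filt (subtopology euclidean (Z_taut K d m n)) (Sigma_disc K d m n) fst i (k - 1))
           homeomorphic_space E"
proof -
  interpret stratum_setup K d m n k i using assms by unfold_locales auto
  show ?thesis
    using stratum_real_affine_bundle unfolding stratum_def filt_def fdim_def ncoeffs_def dK_def e_def .
qed

end
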